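(* Suppose the Cameron–Martin spaces $H^*=\mathcal C^{1/2}(L_2)$ and $\widetilde H^*=\widetilde{\mathcal C}^{1/2}(L_2)$ are norm equivalent Hilbert spaces (Assumption I), and let $\{\mathcal H_n\}_{n\in\mathbb N}$ be a sequence of subspaces of $\mathcal H$ with $\mathcal H_n=\mathbb R\oplus\mathrm{span}\{y^0_{n1},\dots,y^0_{nn}\}$, $y^0_{nj}\in\mathcal H^0$, for every $n$. Then, for every $h\in\mathcal H$, the best linear predictors $\{h_n\}$ based on $\{\mathcal H_n\}$ and $\mu$ are $\mu$-consistent (i.e. $\mathbb E[(h_n-h)^2]\to0$) if and only if the best linear predictors $\{\widetilde h_n\}$ based on $\{\mathcal H_n\}$ and $\widetilde\mu$ are $\widetilde\mu$-consistent (i.e. $\widetilde{\mathbb E}[(\widetilde h_n-h)^2]\to0$). In particular, $\mathcal S^\mu_{\mathrm{adm}}=\mathcal S^{\widetilde\mu}_{\mathrm{adm}}$.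
   Context: Let $(\mathcal X,d_{\mathcal X})$ be a connected, compact metric space of infinite cardinality, $\nu_{\mathcal X}$ a strictly positive finite Borel measure, $L_2=L_2(\mathcal X,\nu_{\mathcal X})$. Let $\varrho,\widetilde\varrho$ be continuous, strictly positive definite covariance functions, $m,\widetilde m\in L_2$, $\mathcal C,\widetilde{\mathcal C}$ the integral operators on $L_2$ with kernels $\varrho,\widetilde\varrho$, and $\mu=N(m,\mathcal C)$, $\widetilde\mu=N(\widetilde m,\widetilde{\mathcal C})$ the induced Gaussian measures on $L_2$. Cameron–Martin norm: $\|u\|_{H^*}=\|\mathcal C^{-1/2}u\|_{L_2}$, analogously for $\widetilde H^*$. Let $Z$ have law $\mu$, $Z^0=Z-m$; $\mathbb E$ is expectation under $\mu$, $\widetilde{\mathbb E}$ the expectation of the same linear functionals when the field has law $\widetilde\mu$. $\mathcal H^0$: closure in $L_2(\Omega,\mathbb P)$ of finite combinations $\sum_j\alpha_jZ^0(x_j)$ with inner product $\mathrm{Cov}$; $\mathcal H=\mathbb R\oplus\mathcal H^0$. Best linear predictor $h_n\in\mathcal H_n$ of $h$: $\mathbb E[(h_n-h)g]=0$ for all $g\in\mathcal H_n$; $\widetilde h_n$ analogously with $\widetilde{\mathbb E}$. $\mathcal S^\mu_{\mathrm{adm}}$ (resp. $\mathcal S^{\widetilde\mu}_{\mathrm{adm}}$): sequences of such subspaces with $y^0_{n1},\dots,y^0_{nn}$ linearly independent for which the $\mu$-predictors are $\mu$-consistent (resp. the $\widetilde\mu$-predictors are $\widetilde\mu$-consistent)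 for every $h\in\mathcal H$. *)

theory Defs
  imports "HOL-Analysis.Analysis"
begin

definition is_L2 :: "'a measure \<Rightarrow> ('a \<Rightarrow> real) \<Rightarrow> bool" where
  "is_L2 \<nu> u \<longleftrightarrow> u \<in> borel_measurable \<nu> \<and> integrable \<nu> (\<lambda>x. (u x)\<^sup>2)"

definition cov_op :: "'a measure \<Rightarrow> ('a \<Rightarrow> 'a \<Rightarrow> real) \<Rightarrow> ('a \<Rightarrow> real) \<Rightarrow> 'a \<Rightarrow> real" where
  "cov_op \<nu> k v = (\<lambda>x. \<integral>y. k x y * v y \<partial>\<nu>)"

text \<open>Cameron--Martin norm of the Gaussian measure with covariance operator C
  (value infinity outside the Cameron--Martin space):
  norm(u) = sup { <u,v> : v in L2, <C v, v> \<le> 1 }, which equals the norm of C^(-1/2) u.\<close>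
definition cm_norm :: "'a measure \<Rightarrow> ('a \<Rightarrow> 'a \<Rightarrow> real) \<Rightarrow> ('a \<Rightarrow> real) \<Rightarrow> ereal" where
  "cm_norm \<nu> k u = Sup {ereal (\<integral>x. u x * v x \<partial>\<nu>) | v.
      is_L2 \<nu> v \<and> (\<integral>x. cov_op \<nu> k v x * v x \<partial>\<nu>) \<le> 1}"

definition cm_space :: "'a measure \<Rightarrow> ('a \<Rightarrow> 'a \<Rightarrow> real) \<Rightarrow> ('a \<Rightarrow> real) set" where
  "cm_space \<nu> k = {u. is_L2 \<nu> u \<and> cm_norm \<nu> k u < \<infinity>}"

definition cm_norm_equivalent :: "'a measure \<Rightarrow> ('a \<Rightarrow> 'a \<Rightarrow> real) \<Rightarrow> ('a \<Rightarrow> 'a \<Rightarrow> real) \<Rightarrow> bool" where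
  "cm_norm_equivalent \<nu> k1 k2 \<longleftrightarrow> cm_space \<nu> k1 = cm_space \<nu> k2 \<and>
     (\<exists>c>0. \<forall>u\<in>cm_space \<nu> k1.
        ereal c * cm_norm \<nu> k1 u \<le> cm_norm \<nu> k2 u \<and>
        cm_norm \<nu> k2 u \<le> ereal (1 / c) * cm_norm \<nu> k1 u)"

definition fsupp :: "('a \<Rightarrow> real) \<Rightarrow> 'a set" where
  "fsupp \<alpha> = {x. \<alpha> x \<noteq> 0}"

text \<open>Covariance of sum_x alpha(x) Z0(x) and sum_y beta(y) Z0(y) for finitely supported alpha, beta.\<close>
definition bil :: "('a \<Rightarrow> 'a \<Rightarrow> real) \<Rightarrow> ('a \<Rightarrow> real) \<Rightarrow> ('a \<Rightarrow> real) \<Rightarrow> real" where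
  "bil k \<alpha> \<beta> = (\<Sum>x\<in>fsupp \<alpha>. \<Sum>y\<in>fsupp \<beta>. \<alpha> x * \<beta> y * k x y)"

definition strictly_pos_def_kernel :: "('a \<Rightarrow> 'a \<Rightarrow> real) \<Rightarrow> bool" where
  "strictly_pos_def_kernel k \<longleftrightarrow> (\<forall>x y. k x y = k y x) \<and>
     (\<forall>\<alpha>. finite (fsupp \<alpha>) \<and> fsupp \<alpha> \<noteq> {} \<longrightarrow> bil k \<alpha> \<alpha> > 0)"

text \<open>An element of H0 is represented by a sequence of finite combinations
  sum_x a_j(x) Z0(x) that is Cauchy in L2(P) (i.e. w.r.t. the covariance k);
  it stands for the L2-limit of that sequence.\<close>
definition H0 :: "('a \<Rightarrow> 'a \<Rightarrow> real) \<Rightarrow> (nat \<Rightarrow> 'a \<Rightarrow> real) set" where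
  "H0 k = {a. (\<forall>j. finite (fsupp (a j))) \<and>
     (\<forall>e>0. \<exists>N. \<forall>i\<ge>N. \<forall>j\<ge>N. bil k (\<lambda>x. a i x - a j x) (\<lambda>x. a i x - a j x) < e)}"

definition covar :: "('a \<Rightarrow> 'a \<Rightarrow> real) \<Rightarrow> (nat \<Rightarrow> 'a \<Rightarrow> real) \<Rightarrow> (nat \<Rightarrow> 'a \<Rightarrow> real) \<Rightarrow> real" where
  "covar k a b = lim (\<lambda>j. bil k (a j) (b j))"

text \<open>H = R (+) H0: a pair (c, a) stands for c + (the element of H0 represented by a).\<close>
definition Hsp :: "('a \<Rightarrow> 'a \<Rightarrow> real) \<Rightarrow> (real \<times> (nat \<Rightarrow> 'a \<Rightarrow> real)) set" where
  "Hsp k = UNIV \<times> H0 k"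

text \<open>Second moment E[h g] under the Gaussian measure with covariance kernel k
  (the H0-components are centred).\<close>
definition mom2 :: "('a \<Rightarrow> 'a \<Rightarrow> real) \<Rightarrow> real \<times> (nat \<Rightarrow> 'a \<Rightarrow> real) \<Rightarrow> real \<times> (nat \<Rightarrow> 'a \<Rightarrow> real) \<Rightarrow> real" where
  "mom2 k h g = fst h * fst g + covar k (snd h) (snd g)"

definition hdiff :: "real \<times> (nat \<Rightarrow> 'a \<Rightarrow> real) \<Rightarrow> real \<times> (nat \<Rightarrow> 'a \<Rightarrow> real) \<Rightarrow> real \<times> (nat \<Rightarrow> 'a \<Rightarrow> real)" where
  "hdiff h g = (fst h - fst g, \<lambda>j x. snd h j x - snd g j x)"

text \<open>H_n = R (+) span{y_n1, ..., y_nn}, where y n i represents y^0_ni in H0.\<close>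
definition comb :: "(nat \<Rightarrow> nat \<Rightarrow> nat \<Rightarrow> 'a \<Rightarrow> real) \<Rightarrow> nat \<Rightarrow> (nat \<Rightarrow> real) \<Rightarrow> nat \<Rightarrow> 'a \<Rightarrow> real" where
  "comb y n \<beta> = (\<lambda>j x. \<Sum>i\<in>{1..n}. \<beta> i * y n i j x)"

definition Hn :: "(nat \<Rightarrow> nat \<Rightarrow> nat \<Rightarrow> 'a \<Rightarrow> real) \<Rightarrow> nat \<Rightarrow> (real \<times> (nat \<Rightarrow> 'a \<Rightarrow> real)) set" where
  "Hn y n = {(c, comb y n \<beta>) | c \<beta>. True}"

definition is_blp :: "('a \<Rightarrow> 'a \<Rightarrow> real) \<Rightarrow> (nat \<Rightarrow> nat \<Rightarrow> nat \<Rightarrow> 'a \<Rightarrow> real) \<Rightarrow> nat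
     \<Rightarrow> real \<times> (nat \<Rightarrow> 'a \<Rightarrow> real) \<Rightarrow> real \<times> (nat \<Rightarrow> 'a \<Rightarrow> real) \<Rightarrow> bool" where
  "is_blp k y n h p \<longleftrightarrow> p \<in> Hn y n \<and> (\<forall>g\<in>Hn y n. mom2 k (hdiff p h) g = 0)"

definition blp_consistent :: "('a \<Rightarrow> 'a \<Rightarrow> real) \<Rightarrow> (nat \<Rightarrow> nat \<Rightarrow> nat \<Rightarrow> 'a \<Rightarrow> real)
     \<Rightarrow> real \<times> (nat \<Rightarrow> 'a \<Rightarrow> real) \<Rightarrow> bool" where
  "blp_consistent k y h \<longleftrightarrow> (\<forall>p. (\<forall>n. is_blp k y n h (p n)) \<longrightarrow>
      (\<lambda>n. mom2 k (hdiff (p n) h) (hdiff (p n) h)) \<longlonglongrightarrow> 0)"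

definition lin_indep_n :: "('a \<Rightarrow> 'a \<Rightarrow> real) \<Rightarrow> (nat \<Rightarrow> nat \<Rightarrow> nat \<Rightarrow> 'a \<Rightarrow> real) \<Rightarrow> nat \<Rightarrow> bool" where
  "lin_indep_n k y n \<longleftrightarrow> (\<forall>\<beta>. covar k (comb y n \<beta>) (comb y n \<beta>) = 0 \<longrightarrow> (\<forall>i\<in>{1..n}. \<beta> i = 0))"

definition S_adm :: "('a \<Rightarrow> 'a \<Rightarrow> real) \<Rightarrow> (nat \<Rightarrow> nat \<Rightarrow> nat \<Rightarrow> 'a \<Rightarrow> real) set" where
  "S_adm k = {y. (\<forall>n. \<forall>i\<in>{1..n}. y n i \<in> H0 k) \<and> (\<forall>n. lin_indep_n k y n) \<and>
                 (\<forall>h\<in>Hsp k. blp_consistent k y h)}"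

end

theory Submission
  imports Defs
begin

(* Both Gaussian Hilbert spaces are completions of the finite combinations of point evaluations,
   whose squared norms are bil rho alpha alpha and bil rho' alpha alpha, so everything reduces to
   comparing these two quadratic forms. The covariance form <C v, v> of a continuous positive
   semidefinite kernel is symmetric and nonnegative (discretise the kernel by a partition of
   unity), the Cameron-Martin norm of C v is at most sqrt <C v, v>, and by duality
   <C v, v> <= |C v|~ sqrt <C~ v, v>, where |.|~ is the Cameron-Martin norm of the other field.
   Norm equivalence therefore gives <C v, v> <= M^2 <C~ v, v> on L2. Testing this with
   normalised indicators of small balls around the points of alpha and using uniform continuity
   of the kernels yields bil rho <= M^2 bil rho', and symmetrically. Hence both kernels give the
   same space H0 with equivalent covariances, and consistency transfers: the rho'-error of the
   rho'-predictor is at most the rho'-error of the rho-predictor (minimality of best linear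
   predictors), which is at most a constant times its rho-error. *)

lemma discriminant_le_of_quadratic_nonneg:
  fixes A B C :: real
  assumes nonneg: "\<And>t. 0 \<le> A + 2 * t * B + t\<^sup>2 * C"
  shows "B\<^sup>2 \<le> A * C"
proof -
  have A: "0 \<le> A" using nonneg[of 0] by simp
  consider "C < 0" | "C = 0" | "C > 0" by linarith
  then show ?thesis
  proof cases
    case 1
    define t where "t = sqrt ((A + 1) / - C)"
    have "t\<^sup>2 * C = - (A + 1)"
      using 1 A by (simp add: t_def field_simps)
    moreover have "0 \<le> (A + 2 * t * B + t\<^sup>2 * C) + (A + 2 * (-t) * B + (-t)\<^sup>2 * C)"
      using nonneg[of t] nonneg[of "-t"] by linarith
    ultimately show ?thesis by (simp add: algebra_simps)
  next
    case 2
    have "B = 0"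
    proof (rule ccontr)
      assume "B \<noteq> 0"
      then have "A + 2 * (-(A + 1) / (2 * B)) * B = -1" by (simp add: field_simps)
      then show False using nonneg[of "-(A + 1) / (2 * B)"] 2 by simp
    qed
    then show ?thesis using 2 by simp
  next
    case 3
    have "0 \<le> A + 2 * (- B / C) * B + (- B / C)\<^sup>2 * C" by (rule nonneg)
    also have "\<dots> = A - B\<^sup>2 / C" using 3 by (simp add: field_simps power2_eq_square)
    finally show ?thesis using 3 by (simp add: field_simps)
  qed
qed

lemma le_of_forall_pos_le_add_mult:
  fixes a b C :: real
  assumes "\<And>e. e > 0 \<Longrightarrow> a \<le> b + e * C"
  shows "a \<le> b"
proof (rule field_le_epsilon)
  fix e :: real assume e: "e > 0"
  show "a \<le> b + e"
  proof (cases "C > 0")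
    case True
    then show ?thesis using assms[of "e / C"] e by simp
  next
    case False
    then show ?thesis using assms[OF e] e mult_nonneg_nonpos[of e C] by linarith
  qed
qed

lemma bil_eq_sum_superset:
  assumes "finite S" "fsupp a \<subseteq> S" "fsupp b \<subseteq> S"
  shows "bil k a b = (\<Sum>x\<in>S. \<Sum>y\<in>S. a x * b y * k x y)"
proof -
  have "bil k a b = (\<Sum>x\<in>fsupp a. \<Sum>y\<in>S. a x * b y * k x y)"
    unfolding bil_def
    by (rule sum.cong[OF refl], rule sum.mono_neutral_left) (use assms in \<open>auto simp: fsupp_def\<close>)
  also have "\<dots> = (\<Sum>x\<in>S. \<Sum>y\<in>S. a x * b y * k x y)"
    by (rule sum.mono_neutral_left) (use assms in \<open>auto simp: fsupp_def\<close>)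
  finally show ?thesis .
qed

lemma finite_fsupp_add_mult:
  "finite (fsupp a) \<Longrightarrow> finite (fsupp b) \<Longrightarrow> finite (fsupp (\<lambda>x. a x + r * b x))"
  by (rule finite_subset[of _ "fsupp a \<union> fsupp b"]) (auto simp: fsupp_def)

lemma finite_fsupp_diff: "finite (fsupp a) \<Longrightarrow> finite (fsupp b) \<Longrightarrow> finite (fsupp (\<lambda>x. a x - b x))"
  by (rule finite_subset[of _ "fsupp a \<union> fsupp b"]) (auto simp: fsupp_def)

lemma bil_add_mult_left:
  assumes "finite (fsupp a)" "finite (fsupp b)" "finite (fsupp c)"
  shows "bil k (\<lambda>x. a x + r * b x) c = bil k a c + r * bil k b c"
proof -
  define S where "S = fsupp a \<union> fsupp b \<union> fsupp c"
  have S: "finite S" using assms by (simp add: S_def)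
  have "bil k (\<lambda>x. a x + r * b x) c = (\<Sum>x\<in>S. \<Sum>y\<in>S. (a x + r * b x) * c y * k x y)"
    "bil k a c = (\<Sum>x\<in>S. \<Sum>y\<in>S. a x * c y * k x y)"
    "bil k b c = (\<Sum>x\<in>S. \<Sum>y\<in>S. b x * c y * k x y)"
    by (rule bil_eq_sum_superset[OF S]; auto simp: S_def fsupp_def)+
  then show ?thesis
    by (simp add: sum_distrib_left sum.distrib[symmetric] distrib_right mult.assoc)
qed

lemma bil_commute:
  assumes "\<forall>x y. k x y = k y x" "finite (fsupp a)" "finite (fsupp b)"
  shows "bil k a b = bil k b a"
proof -
  define S where "S = fsupp a \<union> fsupp b"
  have S: "finite S" using assms by (simp add: S_def)
  have "bil k a b = (\<Sum>x\<in>S. \<Sum>y\<in>S. a x * b y * k x y)"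
    by (rule bil_eq_sum_superset[OF S]) (auto simp: S_def fsupp_def)
  also have "\<dots> = (\<Sum>x\<in>S. \<Sum>y\<in>S. b x * a y * k x y)"
    using assms(1) by (subst sum.swap) (simp add: mult.commute)
  also have "\<dots> = bil k b a"
    by (rule bil_eq_sum_superset[symmetric, OF S]) (auto simp: S_def fsupp_def)
  finally show ?thesis .
qed

lemma bil_mult_self:
  assumes "finite (fsupp a)"
  shows "bil k (\<lambda>x. r * a x) (\<lambda>x. r * a x) = r\<^sup>2 * bil k a a"
proof -
  have "bil k (\<lambda>x. r * a x) (\<lambda>x. r * a x) = (\<Sum>x\<in>fsupp a. \<Sum>y\<in>fsupp a. (r * a x) * (r * a y) * k x y)"
    by (rule bil_eq_sum_superset[OF assms]) (auto simp: fsupp_def)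
  then show ?thesis by (simp add: bil_def sum_distrib_left power2_eq_square mult_ac)
qed

definition pos_semidef_kernel :: "('a \<Rightarrow> 'a \<Rightarrow> real) \<Rightarrow> bool" where
  "pos_semidef_kernel k \<longleftrightarrow> (\<forall>x y. k x y = k y x) \<and> (\<forall>a. finite (fsupp a) \<longrightarrow> 0 \<le> bil k a a)"

lemma strictly_pos_def_kernel_imp_pos_semidef:
  assumes "strictly_pos_def_kernel k"
  shows "pos_semidef_kernel k"
proof -
  have "0 \<le> bil k a a" if "finite (fsupp a)" for a
    using assms that by (cases "fsupp a = {}") (auto simp: bil_def strictly_pos_def_kernel_def less_imp_le)
  then show ?thesis using assms by (simp add: pos_semidef_kernel_def strictly_pos_def_kernel_def)
qed

context
  fixes k :: "'a \<Rightarrow> 'a \<Rightarrow> real"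
  assumes psd: "pos_semidef_kernel k"
begin

lemma pos_semidef_kernel_symmetric: "\<forall>x y. k x y = k y x"
  using psd by (simp add: pos_semidef_kernel_def)

lemma bil_self_nonneg: "finite (fsupp a) \<Longrightarrow> 0 \<le> bil k a a"
  using psd by (simp add: pos_semidef_kernel_def)

lemma double_sum_kernel_nonneg:
  assumes "finite S"
  shows "0 \<le> (\<Sum>x\<in>S. \<Sum>y\<in>S. V x * V y * k x y)"
proof -
  define a where "a x = (if x \<in> S then V x else 0)" for x
  have "fsupp a \<subseteq> S" by (auto simp: a_def fsupp_def)
  then have "bil k a a = (\<Sum>x\<in>S. \<Sum>y\<in>S. V x * V y * k x y)"
    using bil_eq_sum_superset[OF assms] by (simp add: a_def)
  then show ?thesis using bil_self_nonneg \<open>fsupp a \<subseteq> S\<close> assms finite_subset by metis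
qed

lemma bil_add_mult_right:
  assumes "finite (fsupp a)" "finite (fsupp b)" "finite (fsupp c)"
  shows "bil k c (\<lambda>x. a x + r * b x) = bil k c a + r * bil k c b"
  using bil_add_mult_left[OF assms, of k r] bil_commute[OF pos_semidef_kernel_symmetric]
    finite_fsupp_add_mult[OF assms(1,2), of r] assms by simp

lemma bil_add_mult_self:
  assumes a: "finite (fsupp a)" and b: "finite (fsupp b)"
  shows "bil k (\<lambda>x. a x + t * b x) (\<lambda>x. a x + t * b x) = bil k a a + 2 * t * bil k a b + t\<^sup>2 * bil k b b"
proof -
  have ab: "finite (fsupp (\<lambda>x. a x + t * b x))" by (rule finite_fsupp_add_mult[OF a b])
  have "bil k (\<lambda>x. a x + t * b x) (\<lambda>x. a x + t * b x)
      = (bil k a a + t * bil k a b) + t * (bil k b a + t * bil k b b)"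
    using bil_add_mult_left[OF a b ab] bil_add_mult_right[OF a b a] bil_add_mult_right[OF a b b] by simp
  also have "bil k b a = bil k a b" by (rule bil_commute[OF pos_semidef_kernel_symmetric b a])
  finally show ?thesis by (simp add: power2_eq_square algebra_simps)
qed

lemma bil_Cauchy_Schwarz:
  assumes a: "finite (fsupp a)" and b: "finite (fsupp b)"
  shows "(bil k a b)\<^sup>2 \<le> bil k a a * bil k b b"
proof (rule discriminant_le_of_quadratic_nonneg)
  fix t
  show "0 \<le> bil k a a + 2 * t * bil k a b + t\<^sup>2 * bil k b b"
    using bil_self_nonneg[OF finite_fsupp_add_mult[OF a b, of t]] unfolding bil_add_mult_self[OF a b] .
qed

lemma bil_add_mult_self_le:
  assumes a: "finite (fsupp a)" and b: "finite (fsupp b)"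
  shows "bil k (\<lambda>x. a x + t * b x) (\<lambda>x. a x + t * b x) \<le> 2 * bil k a a + 2 * t\<^sup>2 * bil k b b"
  using bil_self_nonneg[OF finite_fsupp_add_mult[OF a b, of "-t"]] bil_add_mult_self[OF a b, of t]
    bil_add_mult_self[OF a b, of "-t"] bil_self_nonneg[OF a]
  by (simp add: power2_eq_square)

lemma sqrt_bil_add_le:
  assumes a: "finite (fsupp a)" and b: "finite (fsupp b)"
  shows "sqrt (bil k (\<lambda>x. a x + b x) (\<lambda>x. a x + b x)) \<le> sqrt (bil k a a) + sqrt (bil k b b)"
proof (rule real_le_lsqrt)
  have qa: "0 \<le> bil k a a" and qb: "0 \<le> bil k b b" using bil_self_nonneg a b by auto
  have "bil k a b \<le> sqrt (bil k a a * bil k b b)"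
    using real_sqrt_le_mono[OF bil_Cauchy_Schwarz[OF a b]] by (simp add: real_le_rsqrt)
  then have "bil k a b \<le> sqrt (bil k a a) * sqrt (bil k b b)" by (simp add: real_sqrt_mult)
  then show "bil k (\<lambda>x. a x + b x) (\<lambda>x. a x + b x) \<le> (sqrt (bil k a a) + sqrt (bil k b b))\<^sup>2"
    using bil_add_mult_self[OF a b, of 1] qa qb by (simp add: power2_sum)
qed (use bil_self_nonneg a b in auto)

lemma abs_sqrt_bil_diff_le:
  assumes a: "finite (fsupp a)" and b: "finite (fsupp b)"
  shows "\<bar>sqrt (bil k a a) - sqrt (bil k b b)\<bar> \<le> sqrt (bil k (\<lambda>x. a x - b x) (\<lambda>x. a x - b x))"
proof -
  have ab: "finite (fsupp (\<lambda>x. a x - b x))" by (rule finite_fsupp_diff[OF a b])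
  have swap: "bil k (\<lambda>x. b x - a x) (\<lambda>x. b x - a x) = bil k (\<lambda>x. a x - b x) (\<lambda>x. a x - b x)"
    using bil_mult_self[OF ab, of k "-1"] by simp
  have "sqrt (bil k a a) \<le> sqrt (bil k b b) + sqrt (bil k (\<lambda>x. a x - b x) (\<lambda>x. a x - b x))"
    using sqrt_bil_add_le[OF b ab] by simp
  moreover have "sqrt (bil k b b) \<le> sqrt (bil k a a) + sqrt (bil k (\<lambda>x. a x - b x) (\<lambda>x. a x - b x))"
    using sqrt_bil_add_le[OF a finite_fsupp_diff[OF b a]] swap by simp
  ultimately show ?thesis unfolding abs_le_iff by linarith
qed

end

subsection \<open>The space H0 and its covariance\<close>

lemma H0_finite_fsupp: "a \<in> H0 k \<Longrightarrow> finite (fsupp (a j))"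
  by (simp add: H0_def)

lemma H0_Cauchy:
  "a \<in> H0 k \<Longrightarrow> e > 0 \<Longrightarrow> \<exists>N. \<forall>i\<ge>N. \<forall>j\<ge>N. bil k (\<lambda>x. a i x - a j x) (\<lambda>x. a i x - a j x) < e"
  by (simp add: H0_def)

lemma Hsp_snd_H0: "h \<in> Hsp k \<Longrightarrow> snd h \<in> H0 k"
  by (auto simp: Hsp_def)

lemma H0_zero: "(\<lambda>j x. 0) \<in> H0 k"
  by (simp add: H0_def fsupp_def bil_def)

context
  fixes k :: "'a \<Rightarrow> 'a \<Rightarrow> real"
  assumes psd: "pos_semidef_kernel k"
begin

lemma H0_add_mult:
  assumes a: "a \<in> H0 k" and b: "b \<in> H0 k"
  shows "(\<lambda>j x. a j x + r * b j x) \<in> H0 k"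
  unfolding H0_def
proof (intro CollectI conjI allI impI)
  show "finite (fsupp (\<lambda>x. a j x + r * b j x))" for j
    using a b by (intro finite_fsupp_add_mult H0_finite_fsupp)
next
  fix e :: real assume e: "e > 0"
  have pos: "2 + 2 * r\<^sup>2 > 0" by (simp add: add_pos_nonneg)
  define e' where "e' = e / (2 + 2 * r\<^sup>2)"
  have e': "e' > 0" using e pos by (simp add: e'_def)
  obtain N1 where N1: "\<forall>i\<ge>N1. \<forall>j\<ge>N1. bil k (\<lambda>x. a i x - a j x) (\<lambda>x. a i x - a j x) < e'"
    using H0_Cauchy[OF a e'] by blast
  obtain N2 where N2: "\<forall>i\<ge>N2. \<forall>j\<ge>N2. bil k (\<lambda>x. b i x - b j x) (\<lambda>x. b i x - b j x) < e'"
    using H0_Cauchy[OF b e'] by blast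
  show "\<exists>N. \<forall>i\<ge>N. \<forall>j\<ge>N. bil k (\<lambda>x. a i x + r * b i x - (a j x + r * b j x))
                                 (\<lambda>x. a i x + r * b i x - (a j x + r * b j x)) < e"
  proof (intro exI[of _ "max N1 N2"] allI impI)
    fix i j assume "max N1 N2 \<le> i" "max N1 N2 \<le> j"
    then have "bil k (\<lambda>x. a i x - a j x) (\<lambda>x. a i x - a j x) < e'"
      "bil k (\<lambda>x. b i x - b j x) (\<lambda>x. b i x - b j x) < e'"
      using N1 N2 by auto
    moreover have "r\<^sup>2 * bil k (\<lambda>x. b i x - b j x) (\<lambda>x. b i x - b j x) \<le> r\<^sup>2 * e'"
      using calculation(2) by (intro mult_left_mono) auto
    ultimately have "2 * bil k (\<lambda>x. a i x - a j x) (\<lambda>x. a i x - a j x)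
        + 2 * r\<^sup>2 * bil k (\<lambda>x. b i x - b j x) (\<lambda>x. b i x - b j x) < (2 + 2 * r\<^sup>2) * e'"
      by (simp add: algebra_simps)
    also have "\<dots> = e" using pos by (simp add: e'_def)
    finally show "bil k (\<lambda>x. a i x + r * b i x - (a j x + r * b j x))
                        (\<lambda>x. a i x + r * b i x - (a j x + r * b j x)) < e"
      using bil_add_mult_self_le[OF psd, of "\<lambda>x. a i x - a j x" "\<lambda>x. b i x - b j x" r]
        a b by (simp add: finite_fsupp_diff H0_finite_fsupp algebra_simps)
  qed
qed

lemma H0_diff: "a \<in> H0 k \<Longrightarrow> b \<in> H0 k \<Longrightarrow> (\<lambda>j x. a j x - b j x) \<in> H0 k"
  using H0_add_mult[of a b "-1"] by simp

lemma H0_sum: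
  assumes "finite I" "\<And>i. i \<in> I \<Longrightarrow> Y i \<in> H0 k"
  shows "(\<lambda>j x. \<Sum>i\<in>I. \<beta> i * Y i j x) \<in> H0 k"
  using assms
proof (induction I rule: finite_induct)
  case (insert i0 I)
  then show ?case
    using H0_add_mult[of "\<lambda>j x. \<Sum>i\<in>I. \<beta> i * Y i j x" "Y i0" "\<beta> i0"] by (simp add: add.commute)
qed (simp add: H0_zero)

lemma convergent_bil_self:
  assumes a: "a \<in> H0 k"
  shows "convergent (\<lambda>j. bil k (a j) (a j))"
proof -
  have "Cauchy (\<lambda>j. sqrt (bil k (a j) (a j)))"
  proof (rule metric_CauchyI)
    fix e :: real assume e: "e > 0"
    obtain N where N: "\<forall>i\<ge>N. \<forall>j\<ge>N. bil k (\<lambda>x. a i x - a j x) (\<lambda>x. a i x - a j x) < e\<^sup>2"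
      using H0_Cauchy[OF a, of "e\<^sup>2"] e by auto
    have "dist (sqrt (bil k (a i) (a i))) (sqrt (bil k (a j) (a j))) < e" if "i \<ge> N" "j \<ge> N" for i j
    proof -
      have "dist (sqrt (bil k (a i) (a i))) (sqrt (bil k (a j) (a j)))
          \<le> sqrt (bil k (\<lambda>x. a i x - a j x) (\<lambda>x. a i x - a j x))"
        unfolding dist_real_def by (rule abs_sqrt_bil_diff_le[OF psd H0_finite_fsupp[OF a] H0_finite_fsupp[OF a]])
      also have "\<dots> < sqrt (e\<^sup>2)" using N that by (simp del: real_sqrt_abs)
      finally show ?thesis using e by simp
    qed
    then show "\<exists>N. \<forall>i\<ge>N. \<forall>j\<ge>N. dist (sqrt (bil k (a i) (a i))) (sqrt (bil k (a j) (a j))) < e" by blast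
  qed
  then obtain L where "(\<lambda>j. sqrt (bil k (a j) (a j))) \<longlonglongrightarrow> L" by (auto simp: Cauchy_convergent_iff convergent_def)
  then have "(\<lambda>j. (sqrt (bil k (a j) (a j)))\<^sup>2) \<longlonglongrightarrow> L\<^sup>2" by (intro tendsto_intros)
  then show ?thesis using bil_self_nonneg[OF psd H0_finite_fsupp[OF a]] by (auto simp: convergent_def)
qed

lemma bil_tendsto_covar:
  assumes a: "a \<in> H0 k" and b: "b \<in> H0 k"
  shows "(\<lambda>j. bil k (a j) (b j)) \<longlonglongrightarrow> covar k a b"
proof -
  define s where "s t = (\<lambda>j x. a j x + t * b j x)" for t
  have polarization: "bil k (a j) (b j) = (bil k (s 1 j) (s 1 j) - bil k (s (-1) j) (s (-1) j)) / 4" for j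
    using bil_add_mult_self[OF psd H0_finite_fsupp[OF a, of j] H0_finite_fsupp[OF b, of j], of 1]
      bil_add_mult_self[OF psd H0_finite_fsupp[OF a, of j] H0_finite_fsupp[OF b, of j], of "-1"]
    by (simp add: s_def)
  have "convergent (\<lambda>j. bil k (s t j) (s t j))" for t
    unfolding s_def by (rule convergent_bil_self[OF H0_add_mult[OF a b]])
  then have "convergent (\<lambda>j. (bil k (s 1 j) (s 1 j) - bil k (s (-1) j) (s (-1) j)) / 4)"
    unfolding divide_inverse by (intro convergent_mult convergent_diff convergent_const)
  then show ?thesis unfolding polarization[symmetric] covar_def by (simp add: convergent_LIMSEQ_iff)
qed

lemma covar_add_mult_left:
  assumes a: "a \<in> H0 k" and b: "b \<in> H0 k" and c: "c \<in> H0 k"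
  shows "covar k (\<lambda>j x. a j x + r * b j x) c = covar k a c + r * covar k b c"
proof (rule LIMSEQ_unique[OF bil_tendsto_covar[OF H0_add_mult[OF a b] c]])
  show "(\<lambda>j. bil k (\<lambda>x. a j x + r * b j x) (c j)) \<longlonglongrightarrow> covar k a c + r * covar k b c"
    using bil_add_mult_left[OF H0_finite_fsupp[OF a] H0_finite_fsupp[OF b] H0_finite_fsupp[OF c]]
    by (simp add: tendsto_intros bil_tendsto_covar[OF a c] bil_tendsto_covar[OF b c])
qed

lemma covar_commute:
  assumes "a \<in> H0 k" "b \<in> H0 k"
  shows "covar k a b = covar k b a"
  using bil_commute[OF pos_semidef_kernel_symmetric[OF psd] H0_finite_fsupp H0_finite_fsupp] assms
  by (simp add: covar_def)

lemma covar_add_mult_right: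
  assumes "a \<in> H0 k" "b \<in> H0 k" "c \<in> H0 k"
  shows "covar k c (\<lambda>j x. a j x + r * b j x) = covar k c a + r * covar k c b"
proof -
  have "covar k c (\<lambda>j x. a j x + r * b j x) = covar k (\<lambda>j x. a j x + r * b j x) c"
    by (rule covar_commute[OF assms(3) H0_add_mult[OF assms(1,2)]])
  then show ?thesis
    using covar_add_mult_left[OF assms, of r] covar_commute[OF assms(3)] assms(1,2) by simp
qed

lemma covar_diff_left:
  assumes "a \<in> H0 k" "b \<in> H0 k" "c \<in> H0 k"
  shows "covar k (\<lambda>j x. a j x - b j x) c = covar k a c - covar k b c"
  using covar_add_mult_left[OF assms, of "-1"] by simp

lemma covar_self_nonneg: "a \<in> H0 k \<Longrightarrow> 0 \<le> covar k a a"
  by (rule LIMSEQ_le_const[OF bil_tendsto_covar]) (use bil_self_nonneg[OF psd H0_finite_fsupp] in auto)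

lemma covar_Cauchy_Schwarz:
  assumes a: "a \<in> H0 k" and b: "b \<in> H0 k"
  shows "(covar k a b)\<^sup>2 \<le> covar k a a * covar k b b"
proof (rule LIMSEQ_le)
  show "(\<lambda>j. (bil k (a j) (b j))\<^sup>2) \<longlonglongrightarrow> (covar k a b)\<^sup>2"
    by (intro tendsto_intros bil_tendsto_covar[OF a b])
  show "(\<lambda>j. bil k (a j) (a j) * bil k (b j) (b j)) \<longlonglongrightarrow> covar k a a * covar k b b"
    by (intro tendsto_intros bil_tendsto_covar a b)
  show "\<exists>N. \<forall>j\<ge>N. (bil k (a j) (b j))\<^sup>2 \<le> bil k (a j) (a j) * bil k (b j) (b j)"
    using bil_Cauchy_Schwarz[OF psd H0_finite_fsupp[OF a] H0_finite_fsupp[OF b]] by blast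
qed

lemma covar_eq_0_if_covar_self_eq_0:
  assumes "a \<in> H0 k" "b \<in> H0 k" "covar k b b = 0"
  shows "covar k a b = 0"
  using covar_Cauchy_Schwarz[OF assms(1,2)] assms(3) by simp

lemma covar_sum_right:
  assumes "finite I" "\<And>i. i \<in> I \<Longrightarrow> Y i \<in> H0 k" "c \<in> H0 k"
  shows "covar k c (\<lambda>j x. \<Sum>i\<in>I. \<beta> i * Y i j x) = (\<Sum>i\<in>I. \<beta> i * covar k c (Y i))"
  using assms
proof (induction I rule: finite_induct)
  case empty
  then show ?case by (simp add: covar_def bil_def fsupp_def)
next
  case (insert i0 I)
  have "(\<lambda>j x. \<Sum>i\<in>insert i0 I. \<beta> i * Y i j x) = (\<lambda>j x. (\<Sum>i\<in>I. \<beta> i * Y i j x) + \<beta> i0 * Y i0 j x)"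
    using insert.hyps by (simp add: add.commute)
  then show ?case
    using insert covar_add_mult_right[OF H0_sum[of I Y \<beta>] _ insert.prems(2), of "Y i0" "\<beta> i0"]
    by (simp add: add.commute)
qed

end

subsection \<open>Orthogonal projections onto finite spans\<close>

definition lin_comb :: "(nat \<Rightarrow> nat \<Rightarrow> 'a \<Rightarrow> real) \<Rightarrow> nat \<Rightarrow> (nat \<Rightarrow> real) \<Rightarrow> nat \<Rightarrow> 'a \<Rightarrow> real" where
  "lin_comb Y m \<beta> = (\<lambda>j x. \<Sum>l\<in>{1..m}. \<beta> l * Y l j x)"

lemma comb_eq_lin_comb: "comb y n \<beta> = lin_comb (y n) n \<beta>"
  by (simp add: comb_def lin_comb_def)

lemma lin_comb_Suc: "lin_comb Y (Suc m) \<beta> = (\<lambda>j x. lin_comb Y m \<beta> j x + \<beta> (Suc m) * Y (Suc m) j x)"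
  by (simp add: lin_comb_def sum.cl_ivl_Suc)

lemma lin_comb_cong: "(\<And>i. i \<in> {1..m} \<Longrightarrow> \<beta> i = \<beta>' i) \<Longrightarrow> lin_comb Y m \<beta> = lin_comb Y m \<beta>'"
  unfolding lin_comb_def by (intro ext sum.cong) auto

lemma lin_comb_diff_mult:
  "lin_comb Y m (\<lambda>i. \<beta> i - t * \<gamma> i) = (\<lambda>j x. lin_comb Y m \<beta> j x - t * lin_comb Y m \<gamma> j x)"
  unfolding lin_comb_def by (intro ext) (simp add: sum_distrib_left sum_subtractf[symmetric] algebra_simps)

context
  fixes k :: "'a \<Rightarrow> 'a \<Rightarrow> real"
  assumes psd: "pos_semidef_kernel k"
begin

lemma lin_comb_H0: "\<forall>i\<in>{1..m}. Y i \<in> H0 k \<Longrightarrow> lin_comb Y m \<beta> \<in> H0 k"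
  unfolding lin_comb_def by (rule H0_sum[OF psd]) auto

lemma covar_lin_comb_eq_0:
  assumes "\<forall>i\<in>{1..m}. Y i \<in> H0 k" "c \<in> H0 k" "\<forall>i\<in>{1..m}. covar k c (Y i) = 0"
  shows "covar k c (lin_comb Y m \<gamma>) = 0"
  unfolding lin_comb_def using covar_sum_right[OF psd _ _ assms(2), of "{1..m}" Y \<gamma>] assms(1,3) by simp

lemma exists_add_mult_orthogonal:
  assumes w: "w \<in> H0 k" and z: "z \<in> H0 k"
  obtains t where "covar k (\<lambda>j x. w j x + t * z j x) z = 0"
proof (cases "covar k z z = 0")
  case True
  then show ?thesis
    using that[of 0] covar_eq_0_if_covar_self_eq_0[OF psd w z] by simp
next
  case False
  show ?thesis
  proof (rule that)
    show "covar k (\<lambda>j x. w j x + (- covar k w z / covar k z z) * z j x) z = 0"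
      unfolding covar_add_mult_left[OF psd w z z] using False by simp
  qed
qed

lemma exists_orthogonal_projection:
  assumes "\<forall>i\<in>{1..m}. Y i \<in> H0 k" and "a \<in> H0 k"
  shows "\<exists>\<beta>. \<forall>i\<in>{1..m}. covar k (\<lambda>j x. lin_comb Y m \<beta> j x - a j x) (Y i) = 0"
  using assms
proof (induction m arbitrary: a)
  case 0
  then show ?case by simp
next
  case (Suc m)
  have Y: "\<forall>i\<in>{1..m}. Y i \<in> H0 k" and Y_Suc: "Y (Suc m) \<in> H0 k" using Suc.prems(1) by auto
  obtain \<gamma> where \<gamma>: "\<forall>i\<in>{1..m}. covar k (\<lambda>j x. lin_comb Y m \<gamma> j x - Y (Suc m) j x) (Y i) = 0"
    using Suc.IH[OF Y Y_Suc] by blast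
  obtain \<beta> where \<beta>: "\<forall>i\<in>{1..m}. covar k (\<lambda>j x. lin_comb Y m \<beta> j x - a j x) (Y i) = 0"
    using Suc.IH[OF Y Suc.prems(2)] by blast
  define z where "z = (\<lambda>j x. Y (Suc m) j x - lin_comb Y m \<gamma> j x)"
  define w where "w = (\<lambda>j x. lin_comb Y m \<beta> j x - a j x)"
  have \<gamma>_H0: "lin_comb Y m \<gamma> \<in> H0 k" by (rule lin_comb_H0[OF Y])
  have z_H0: "z \<in> H0 k" unfolding z_def by (rule H0_diff[OF psd Y_Suc \<gamma>_H0])
  have w_H0: "w \<in> H0 k" unfolding w_def by (rule H0_diff[OF psd lin_comb_H0[OF Y] Suc.prems(2)])
  obtain t where r_z: "covar k (\<lambda>j x. w j x + t * z j x) z = 0"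
    using exists_add_mult_orthogonal[OF w_H0 z_H0] by blast
  define \<beta>' where "\<beta>' i = (if i = Suc m then t else \<beta> i - t * \<gamma> i)" for i
  have r_H0: "(\<lambda>j x. w j x + t * z j x) \<in> H0 k" by (rule H0_add_mult[OF psd w_H0 z_H0])
  have "lin_comb Y m \<beta>' = lin_comb Y m (\<lambda>i. \<beta> i - t * \<gamma> i)" by (rule lin_comb_cong) (simp add: \<beta>'_def)
  then have residual: "(\<lambda>j x. lin_comb Y (Suc m) \<beta>' j x - a j x) = (\<lambda>j x. w j x + t * z j x)"
    unfolding lin_comb_Suc lin_comb_diff_mult by (auto simp: \<beta>'_def w_def z_def algebra_simps)
  have z_orth: "covar k z (Y i) = 0" if "i \<in> {1..m}" for i
    using \<gamma> that covar_diff_left[OF psd \<gamma>_H0 Y_Suc, of "Y i"]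
      covar_diff_left[OF psd Y_Suc \<gamma>_H0, of "Y i"] Y by (simp add: z_def)
  have w_orth: "covar k w (Y i) = 0" if "i \<in> {1..m}" for i
    using \<beta> that by (simp add: w_def)
  have r_orth: "covar k (\<lambda>j x. w j x + t * z j x) (Y i) = 0" if "i \<in> {1..m}" for i
    using covar_add_mult_left[OF psd w_H0 z_H0, of "Y i" t] w_orth[OF that] z_orth[OF that] Y that by simp
  have "covar k (\<lambda>j x. w j x + t * z j x) (lin_comb Y m \<gamma>) = 0"
    using covar_lin_comb_eq_0[OF Y r_H0] r_orth by blast
  moreover have "Y (Suc m) = (\<lambda>j x. z j x + 1 * lin_comb Y m \<gamma> j x)" by (simp add: z_def)
  ultimately have "covar k (\<lambda>j x. w j x + t * z j x) (Y (Suc m)) = 0"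
    using covar_add_mult_right[OF psd z_H0 \<gamma>_H0 r_H0, of 1] r_z by simp
  then have "\<forall>i\<in>{1..Suc m}. covar k (\<lambda>j x. w j x + t * z j x) (Y i) = 0"
    using r_orth by (auto simp: le_Suc_eq)
  then show ?case unfolding residual[symmetric] by blast
qed

end

lemma mom2_self_nonneg: "pos_semidef_kernel k \<Longrightarrow> snd g \<in> H0 k \<Longrightarrow> 0 \<le> mom2 k g g"
  unfolding mom2_def by (intro add_nonneg_nonneg) (simp_all add: covar_self_nonneg)

context
  fixes k :: "'a \<Rightarrow> 'a \<Rightarrow> real" and y :: "nat \<Rightarrow> nat \<Rightarrow> nat \<Rightarrow> 'a \<Rightarrow> real" and n :: nat
  assumes psd: "pos_semidef_kernel k" and Y: "\<forall>i\<in>{1..n}. y n i \<in> H0 k"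
begin

lemma comb_H0: "comb y n \<beta> \<in> H0 k"
  unfolding comb_eq_lin_comb by (rule lin_comb_H0[OF psd Y])

lemma snd_hdiff_H0:
  assumes "p \<in> Hn y n" "h \<in> Hsp k"
  shows "snd (hdiff p h) \<in> H0 k"
proof -
  obtain c \<beta> where "p = (c, comb y n \<beta>)" using assms(1) by (auto simp: Hn_def)
  then show ?thesis
    using H0_diff[OF psd comb_H0 Hsp_snd_H0[OF assms(2)]] by (simp add: hdiff_def)
qed

lemma is_blp_exists:
  assumes h: "h \<in> Hsp k"
  shows "\<exists>p. is_blp k y n h p"
proof -
  have a: "snd h \<in> H0 k" by (rule Hsp_snd_H0[OF h])
  obtain \<beta> where \<beta>: "\<forall>i\<in>{1..n}. covar k (\<lambda>j x. comb y n \<beta> j x - snd h j x) (y n i) = 0"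
    using exists_orthogonal_projection[OF psd Y a] unfolding comb_eq_lin_comb by blast
  define d where "d = (\<lambda>j x. comb y n \<beta> j x - snd h j x)"
  have d: "d \<in> H0 k" unfolding d_def by (rule H0_diff[OF psd comb_H0 a])
  have "mom2 k (hdiff (fst h, comb y n \<beta>) h) g = 0" if "g \<in> Hn y n" for g
  proof -
    obtain c \<beta>' where g: "g = (c, comb y n \<beta>')" using \<open>g \<in> Hn y n\<close> by (auto simp: Hn_def)
    have "covar k d (comb y n \<beta>') = (\<Sum>i\<in>{1..n}. \<beta>' i * covar k d (y n i))"
      unfolding comb_def by (rule covar_sum_right[OF psd]) (use Y d in auto)
    then show ?thesis using \<beta> by (simp add: mom2_def hdiff_def g d_def)
  qed
  then have "is_blp k y n h (fst h, comb y n \<beta>)"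
    unfolding is_blp_def by (auto simp: Hn_def)
  then show ?thesis ..
qed

lemma is_blp_minimal:
  assumes h: "h \<in> Hsp k" and p: "is_blp k y n h p" and q: "q \<in> Hn y n"
  shows "mom2 k (hdiff p h) (hdiff p h) \<le> mom2 k (hdiff q h) (hdiff q h)"
proof -
  have a: "snd h \<in> H0 k" by (rule Hsp_snd_H0[OF h])
  obtain cp \<beta> where p_eq: "p = (cp, comb y n \<beta>)" using p by (auto simp: is_blp_def Hn_def)
  obtain cq \<beta>' where q_eq: "q = (cq, comb y n \<beta>')" using q by (auto simp: Hn_def)
  define c where "c = fst h"
  define d where "d = (\<lambda>j x. comb y n \<beta> j x - snd h j x)"
  define e where "e = comb y n (\<lambda>i. \<beta>' i - \<beta> i)"
  have d_H0: "d \<in> H0 k" unfolding d_def by (rule H0_diff[OF psd comb_H0 a])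
  have e_H0: "e \<in> H0 k" unfolding e_def by (rule comb_H0)
  have "(cq - cp, e) \<in> Hn y n" by (auto simp: Hn_def e_def)
  then have "mom2 k (hdiff p h) (cq - cp, e) = 0" using p by (simp add: is_blp_def)
  then have orth: "(cp - c) * (cq - cp) + covar k d e = 0"
    by (simp add: mom2_def hdiff_def p_eq c_def d_def)
  have q_d_e: "(\<lambda>j x. comb y n \<beta>' j x - snd h j x) = (\<lambda>j x. d j x + 1 * e j x)"
    unfolding d_def e_def comb_def by (auto simp: sum_subtractf algebra_simps)
  have "covar k (\<lambda>j x. d j x + 1 * e j x) (\<lambda>j x. d j x + 1 * e j x)
      = covar k d d + 2 * covar k d e + covar k e e"
    using covar_add_mult_left[OF psd d_H0 e_H0 H0_add_mult[OF psd d_H0 e_H0, of 1], of 1]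
      covar_add_mult_right[OF psd d_H0 e_H0 d_H0, of 1] covar_add_mult_right[OF psd d_H0 e_H0 e_H0, of 1]
      covar_commute[OF psd d_H0 e_H0]
    by simp
  then have "mom2 k (hdiff q h) (hdiff q h) = (cq - c)\<^sup>2 + (covar k d d + 2 * covar k d e + covar k e e)"
    by (simp add: mom2_def hdiff_def q_eq c_def q_d_e power2_eq_square)
  moreover have "mom2 k (hdiff p h) (hdiff p h) = (cp - c)\<^sup>2 + covar k d d"
    by (simp add: mom2_def hdiff_def p_eq c_def d_def power2_eq_square)
  moreover have "(cq - c)\<^sup>2 = (cp - c)\<^sup>2 + 2 * ((cp - c) * (cq - cp)) + (cq - cp)\<^sup>2"
    by (simp add: power2_eq_square algebra_simps)
  ultimately show ?thesis
    using orth covar_self_nonneg[OF psd e_H0] zero_le_power2[of "cq - cp"] by linarith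
qed

end

subsection \<open>Comparable kernels\<close>

definition kernel_le_scaled :: "('a \<Rightarrow> 'a \<Rightarrow> real) \<Rightarrow> real \<Rightarrow> ('a \<Rightarrow> 'a \<Rightarrow> real) \<Rightarrow> bool" where
  "kernel_le_scaled k2 M k1 \<longleftrightarrow> (\<forall>a. finite (fsupp a) \<longrightarrow> bil k2 a a \<le> M * bil k1 a a)"

lemma H0_subset_if_kernel_le_scaled:
  assumes le: "kernel_le_scaled k2 M k1" and M: "M > 0"
  shows "H0 k1 \<subseteq> H0 k2"
proof
  fix a assume a: "a \<in> H0 k1"
  show "a \<in> H0 k2"
    unfolding H0_def
  proof (intro CollectI conjI allI impI)
    show "finite (fsupp (a j))" for j by (rule H0_finite_fsupp[OF a])
    fix e :: real assume e: "e > 0"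
    obtain N where N: "\<forall>i\<ge>N. \<forall>j\<ge>N. bil k1 (\<lambda>x. a i x - a j x) (\<lambda>x. a i x - a j x) < e / M"
      using H0_Cauchy[OF a, of "e / M"] e M by auto
    have "bil k2 (\<lambda>x. a i x - a j x) (\<lambda>x. a i x - a j x) < e" if "i \<ge> N" "j \<ge> N" for i j
    proof -
      have "bil k2 (\<lambda>x. a i x - a j x) (\<lambda>x. a i x - a j x) \<le> M * bil k1 (\<lambda>x. a i x - a j x) (\<lambda>x. a i x - a j x)"
        using le finite_fsupp_diff[OF H0_finite_fsupp[OF a] H0_finite_fsupp[OF a]]
        by (simp add: kernel_le_scaled_def)
      also have "\<dots> < M * (e / M)" using N that M by (intro mult_strict_left_mono) auto
      finally show ?thesis using M by simp
    qed
    then show "\<exists>N. \<forall>i\<ge>N. \<forall>j\<ge>N. bil k2 (\<lambda>x. a i x - a j x) (\<lambda>x. a i x - a j x) < e" by blast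
  qed
qed

context
  fixes k1 k2 :: "'a \<Rightarrow> 'a \<Rightarrow> real" and M :: real
  assumes psd1: "pos_semidef_kernel k1" and psd2: "pos_semidef_kernel k2"
    and le: "kernel_le_scaled k2 M k1" and M: "M > 0"
begin

lemma covar_le_if_kernel_le_scaled:
  assumes a: "a \<in> H0 k1"
  shows "covar k2 a a \<le> M * covar k1 a a"
proof (rule LIMSEQ_le)
  have a2: "a \<in> H0 k2" using H0_subset_if_kernel_le_scaled[OF le M] a by blast
  show "(\<lambda>j. bil k2 (a j) (a j)) \<longlonglongrightarrow> covar k2 a a" by (rule bil_tendsto_covar[OF psd2 a2 a2])
  show "(\<lambda>j. M * bil k1 (a j) (a j)) \<longlonglongrightarrow> M * covar k1 a a"
    by (intro tendsto_intros bil_tendsto_covar[OF psd1 a a])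
  show "\<exists>N. \<forall>j\<ge>N. bil k2 (a j) (a j) \<le> M * bil k1 (a j) (a j)"
    using le H0_finite_fsupp[OF a] by (auto simp: kernel_le_scaled_def)
qed

lemma mom2_le_if_kernel_le_scaled:
  assumes g: "snd g \<in> H0 k1"
  shows "mom2 k2 g g \<le> max 1 M * mom2 k1 g g"
proof -
  have "fst g * fst g \<le> max 1 M * (fst g * fst g)"
    using mult_right_mono[of 1 "max 1 M" "fst g * fst g"] by simp
  moreover have "covar k2 (snd g) (snd g) \<le> max 1 M * covar k1 (snd g) (snd g)"
    using covar_le_if_kernel_le_scaled[OF g] covar_self_nonneg[OF psd1 g]
      mult_right_mono[of M "max 1 M" "covar k1 (snd g) (snd g)"] by simp
  ultimately show ?thesis by (simp add: mom2_def algebra_simps)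
qed

lemma blp_consistent_if_kernel_le_scaled:
  assumes Y: "\<forall>n. \<forall>i\<in>{1..n}. y n i \<in> H0 k1" and h: "h \<in> Hsp k1"
    and consistent: "blp_consistent k1 y h"
  shows "blp_consistent k2 y h"
  unfolding blp_consistent_def
proof (intro allI impI)
  fix q assume q: "\<forall>n. is_blp k2 y n h (q n)"
  have sub: "H0 k1 \<subseteq> H0 k2" by (rule H0_subset_if_kernel_le_scaled[OF le M])
  have Y2: "\<forall>i\<in>{1..n}. y n i \<in> H0 k2" for n using Y sub by blast
  have h2: "h \<in> Hsp k2" using h sub by (auto simp: Hsp_def)
  have "\<forall>n. \<exists>p. is_blp k1 y n h p" using is_blp_exists[OF psd1 _ h] Y by blast
  then obtain p where p: "\<And>n. is_blp k1 y n h (p n)" by metis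
  have "(\<lambda>n. mom2 k1 (hdiff (p n) h) (hdiff (p n) h)) \<longlonglongrightarrow> 0"
    using consistent p unfolding blp_consistent_def by blast
  then have lim: "(\<lambda>n. max 1 M * mom2 k1 (hdiff (p n) h) (hdiff (p n) h)) \<longlonglongrightarrow> 0"
    using tendsto_mult_left[of _ 0 _ "max 1 M"] by simp
  have upper: "mom2 k2 (hdiff (q n) h) (hdiff (q n) h) \<le> max 1 M * mom2 k1 (hdiff (p n) h) (hdiff (p n) h)" for n
  proof -
    have pn: "p n \<in> Hn y n" using p[of n] by (simp add: is_blp_def)
    have Y1: "\<forall>i\<in>{1..n}. y n i \<in> H0 k1" using Y by blast
    have "mom2 k2 (hdiff (q n) h) (hdiff (q n) h) \<le> mom2 k2 (hdiff (p n) h) (hdiff (p n) h)"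
      using is_blp_minimal[OF psd2 Y2 h2 _ pn] q by blast
    also have "\<dots> \<le> max 1 M * mom2 k1 (hdiff (p n) h) (hdiff (p n) h)"
      by (rule mom2_le_if_kernel_le_scaled[OF snd_hdiff_H0[where y=y and n=n, OF psd1 Y1 pn h]])
    finally show ?thesis .
  qed
  have lower: "0 \<le> mom2 k2 (hdiff (q n) h) (hdiff (q n) h)" for n
  proof -
    have "q n \<in> Hn y n" using q by (simp add: is_blp_def)
    then show ?thesis by (intro mom2_self_nonneg[OF psd2] snd_hdiff_H0[where y=y and n=n, OF psd2 Y2 _ h2])
  qed
  show "(\<lambda>n. mom2 k2 (hdiff (q n) h) (hdiff (q n) h)) \<longlonglongrightarrow> 0"
    by (rule tendsto_sandwich[OF always_eventually[OF allI[OF lower]] always_eventually[OF allI[OF upper]]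
          tendsto_const lim])
qed

end

context
  fixes k1 k2 :: "'a \<Rightarrow> 'a \<Rightarrow> real" and M :: real
  assumes psd1: "pos_semidef_kernel k1" and psd2: "pos_semidef_kernel k2" and M: "M > 0"
    and le21: "kernel_le_scaled k2 M k1" and le12: "kernel_le_scaled k1 M k2"
begin

lemma H0_eq_if_kernels_comparable: "H0 k1 = H0 k2"
  using H0_subset_if_kernel_le_scaled[OF le21 M] H0_subset_if_kernel_le_scaled[OF le12 M] by blast

lemma blp_consistent_iff_if_kernels_comparable:
  assumes "\<forall>n. \<forall>i\<in>{1..n}. y n i \<in> H0 k1" "h \<in> Hsp k1"
  shows "blp_consistent k1 y h \<longleftrightarrow> blp_consistent k2 y h"
  using blp_consistent_if_kernel_le_scaled[OF psd1 psd2 le21 M assms]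
    blp_consistent_if_kernel_le_scaled[OF psd2 psd1 le12 M] assms H0_eq_if_kernels_comparable
  by (auto simp: Hsp_def)

lemma lin_indep_n_iff_if_kernels_comparable:
  assumes Y: "\<forall>i\<in>{1..n}. y n i \<in> H0 k1"
  shows "lin_indep_n k1 y n \<longleftrightarrow> lin_indep_n k2 y n"
proof -
  have "covar k1 a a = 0 \<longleftrightarrow> covar k2 a a = 0" if a: "a \<in> H0 k1" for a
  proof -
    have a2: "a \<in> H0 k2" using a H0_eq_if_kernels_comparable by simp
    have "covar k2 a a \<le> M * covar k1 a a" "covar k1 a a \<le> M * covar k2 a a"
      using covar_le_if_kernel_le_scaled[OF psd1 psd2 le21 M a]
        covar_le_if_kernel_le_scaled[OF psd2 psd1 le12 M a2] .
    then show ?thesis using covar_self_nonneg[OF psd1 a] covar_self_nonneg[OF psd2 a2] by auto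
  qed
  then show ?thesis using comb_H0[where y=y and n=n, OF psd1 Y] by (simp add: lin_indep_n_def)
qed

lemma S_adm_eq_if_kernels_comparable: "S_adm k1 = S_adm k2"
proof -
  have Hsp: "Hsp k1 = Hsp k2" by (simp add: Hsp_def H0_eq_if_kernels_comparable)
  have "y \<in> S_adm k1 \<longleftrightarrow> y \<in> S_adm k2" if Y: "\<forall>n. \<forall>i\<in>{1..n}. y n i \<in> H0 k1" for y
  proof -
    have "(\<forall>n. lin_indep_n k1 y n) \<longleftrightarrow> (\<forall>n. lin_indep_n k2 y n)"
      using lin_indep_n_iff_if_kernels_comparable Y by blast
    moreover have "(\<forall>h\<in>Hsp k1. blp_consistent k1 y h) \<longleftrightarrow> (\<forall>h\<in>Hsp k2. blp_consistent k2 y h)"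
      using blp_consistent_iff_if_kernels_comparable[OF Y] Hsp by blast
    ultimately show ?thesis using Y H0_eq_if_kernels_comparable by (simp add: S_adm_def)
  qed
  moreover have "y \<notin> S_adm k1 \<and> y \<notin> S_adm k2" if "\<not> (\<forall>n. \<forall>i\<in>{1..n}. y n i \<in> H0 k1)" for y
    using that H0_eq_if_kernels_comparable by (simp add: S_adm_def)
  ultimately show ?thesis by blast
qed

end

subsection \<open>Covariance operators of continuous kernels\<close>

lemma continuous_partition_of_unity_subordinate_to_balls:
  fixes r :: real
  assumes "compact (UNIV :: 'a set)" and "r > 0"
  obtains S :: "'a::metric_space set" and \<phi> :: "'a \<Rightarrow> 'a \<Rightarrow> real"
  where "finite S" "\<And>c. continuous_on UNIV (\<phi> c)" "\<And>c x. 0 \<le> \<phi> c x" "\<And>c x. \<phi> c x \<le> 1"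
    "\<And>x. (\<Sum>c\<in>S. \<phi> c x) = 1" "\<And>c x. \<phi> c x \<noteq> 0 \<Longrightarrow> dist x c < r"
proof -
  have "UNIV \<subseteq> (\<Union>c. ball c r)" using assms(2) by auto
  then obtain S :: "'a set" where S: "finite S" "UNIV \<subseteq> (\<Union>c\<in>S. ball c r)"
    using compactE_image[OF assms(1), of UNIV "\<lambda>c. ball c r"] by auto
  define \<psi> where "\<psi> c x = max 0 (r - dist x c)" for c x :: 'a
  define \<phi> where "\<phi> c x = (if c \<in> S then \<psi> c x / (\<Sum>d\<in>S. \<psi> d x) else 0)" for c x
  have \<psi>_nonneg: "0 \<le> \<psi> c x" for c x by (simp add: \<psi>_def)
  have \<psi>_le_sum: "\<psi> c x \<le> (\<Sum>d\<in>S. \<psi> d x)" if "c \<in> S" for c x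
    by (rule member_le_sum[OF that]) (use \<psi>_nonneg S in auto)
  have sum_pos: "(\<Sum>d\<in>S. \<psi> d x) > 0" for x
  proof -
    have "x \<in> (\<Union>c\<in>S. ball c r)" using S(2) by blast
    then obtain c where c: "c \<in> S" "dist c x < r" by auto
    then have "0 < \<psi> c x" by (simp add: \<psi>_def dist_commute)
    then show ?thesis using \<psi>_le_sum[OF c(1), of x] by linarith
  qed
  show ?thesis
  proof
    show "continuous_on UNIV (\<phi> c)" for c
    proof (cases "c \<in> S")
      case True
      have "continuous_on UNIV (\<psi> d)" for d unfolding \<psi>_def by (intro continuous_intros)
      then have "continuous_on UNIV (\<lambda>x. \<psi> c x / (\<Sum>d\<in>S. \<psi> d x))"
        using sum_pos by (intro continuous_on_divide continuous_on_sum) (auto simp: less_imp_neq[symmetric])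
      then show ?thesis using True by (simp add: \<phi>_def)
    qed (simp add: \<phi>_def)
    show "0 \<le> \<phi> c x" for c x using \<psi>_nonneg sum_pos[of x] by (simp add: \<phi>_def)
    show "\<phi> c x \<le> 1" for c x using \<psi>_le_sum sum_pos[of x] by (simp add: \<phi>_def)
    show "(\<Sum>c\<in>S. \<phi> c x) = 1" for x
      using sum_pos[of x] by (simp add: \<phi>_def sum_divide_distrib[symmetric])
    show "dist x c < r" if "\<phi> c x \<noteq> 0" for c x
      using that by (auto simp: \<phi>_def \<psi>_def split: if_splits)
  qed (rule S(1))
qed

lemma abs_integral_le_integral:
  fixes f g :: "'a \<Rightarrow> real"
  assumes "integrable M f" "integrable M g" "\<And>x. \<bar>f x\<bar> \<le> g x"
  shows "\<bar>integral\<^sup>L M f\<bar> \<le> integral\<^sup>L M g"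
  by (rule order_trans[OF integral_abs_bound Bochner_Integration.integral_mono]) (use assms in auto)

lemma integrable_bounded_mult:
  fixes v g :: "'a \<Rightarrow> real"
  assumes v: "integrable M v" and g: "g \<in> borel_measurable M" and bounded: "\<And>y. \<bar>g y\<bar> \<le> B"
  shows "integrable M (\<lambda>y. g y * v y)"
proof (rule Bochner_Integration.integrable_bound[where f="\<lambda>y. \<bar>B\<bar> * v y"])
  show "integrable M (\<lambda>y. \<bar>B\<bar> * v y)" using v by simp
  show "(\<lambda>y. g y * v y) \<in> borel_measurable M" using g borel_measurable_integrable[OF v] by measurable
  show "AE x in M. norm (g x * v x) \<le> norm (\<bar>B\<bar> * v x)"
    using bounded by (intro AE_I2) (simp add: abs_mult mult_right_mono order_trans[OF _ abs_ge_self])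
qed

lemma is_L2_mult: "is_L2 M v \<Longrightarrow> is_L2 M (\<lambda>x. t * v x)"
  unfolding is_L2_def by (auto simp: power_mult_distrib)

definition cov_form :: "'a measure \<Rightarrow> ('a \<Rightarrow> 'a \<Rightarrow> real) \<Rightarrow> ('a \<Rightarrow> real) \<Rightarrow> ('a \<Rightarrow> real) \<Rightarrow> real" where
  "cov_form \<nu> K v w = (\<integral>x. cov_op \<nu> K v x * w x \<partial>\<nu>)"

locale finite_measure_on_compact =
  fixes \<nu> :: "'a::metric_space measure"
  assumes sets_eq_borel: "sets \<nu> = sets borel" and space_eq_UNIV: "space \<nu> = UNIV"
    and finite_nu: "finite_measure \<nu>" and compact_UNIV: "compact (UNIV :: 'a set)"
begin

sublocale finite_measure \<nu> by (rule finite_nu)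

lemma borel_measurable_continuous_on_UNIV:
  "continuous_on UNIV (g :: 'a \<Rightarrow> real) \<Longrightarrow> g \<in> borel_measurable \<nu>"
  using borel_measurable_continuous_onI measurable_cong_sets[OF sets_eq_borel refl] by blast

lemma integrable_bounded:
  "g \<in> borel_measurable \<nu> \<Longrightarrow> (\<And>x. \<bar>g x\<bar> \<le> B) \<Longrightarrow> integrable \<nu> (g :: 'a \<Rightarrow> real)"
  by (rule integrable_const_bound[where B=B]) auto

lemma is_L2_bounded:
  assumes "g \<in> borel_measurable \<nu>" "\<And>x. \<bar>g x\<bar> \<le> B"
  shows "is_L2 \<nu> g"
proof -
  have "\<bar>(g x)\<^sup>2\<bar> \<le> B\<^sup>2" for x using power_mono[OF assms(2)[of x] abs_ge_zero, of 2] by simp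
  then have "integrable \<nu> (\<lambda>x. (g x)\<^sup>2)" by (rule integrable_bounded[rotated]) (use assms(1) in simp)
  then show ?thesis using assms(1) by (simp add: is_L2_def)
qed

lemma is_L2_integrable:
  assumes "is_L2 \<nu> v"
  shows "integrable \<nu> v"
proof (rule Bochner_Integration.integrable_bound[where f="\<lambda>x. 1 + (v x)\<^sup>2"])
  show "integrable \<nu> (\<lambda>x. 1 + (v x)\<^sup>2)" "v \<in> borel_measurable \<nu>"
    using assms by (auto simp: is_L2_def)
  have "\<bar>v x\<bar> \<le> 1 + (v x)\<^sup>2" for x
    using zero_le_power2[of "\<bar>v x\<bar> - 1"] by (simp add: power2_eq_square algebra_simps)
  then show "AE x in \<nu>. norm (v x) \<le> norm (1 + (v x)\<^sup>2)" by simp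
qed

lemma abs_weighted_mean_diff_le:
  fixes \<psi> g :: "'a \<Rightarrow> real"
  assumes \<psi>: "integrable \<nu> \<psi>" "\<And>x. 0 \<le> \<psi> x" "(\<integral>x. \<psi> x \<partial>\<nu>) = 1"
    and g: "g \<in> borel_measurable \<nu>" "\<And>x. \<bar>g x\<bar> \<le> G"
    and close: "\<And>x. \<psi> x \<noteq> 0 \<Longrightarrow> \<bar>g x - a\<bar> \<le> \<eta>"
  shows "\<bar>(\<integral>x. \<psi> x * g x \<partial>\<nu>) - a\<bar> \<le> \<eta>"
proof -
  have \<psi>g: "integrable \<nu> (\<lambda>x. \<psi> x * g x)"
    using integrable_bounded_mult[OF \<psi>(1) g] by (simp add: mult.commute)
  have "(\<integral>x. \<psi> x * g x \<partial>\<nu>) - a = (\<integral>x. \<psi> x * (g x - a) \<partial>\<nu>)"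
    using \<psi>g \<psi>(1,3) by (simp add: right_diff_distrib)
  also have "\<bar>\<dots>\<bar> \<le> (\<integral>x. \<eta> * \<psi> x \<partial>\<nu>)"
  proof (rule abs_integral_le_integral)
    show "integrable \<nu> (\<lambda>x. \<psi> x * (g x - a))" using \<psi>g \<psi>(1) by (simp add: right_diff_distrib)
    show "integrable \<nu> (\<lambda>x. \<eta> * \<psi> x)" using \<psi>(1) by simp
    show "\<bar>\<psi> x * (g x - a)\<bar> \<le> \<eta> * \<psi> x" for x
      using close[of x] \<psi>(2)[of x] by (cases "\<psi> x = 0") (auto simp: abs_mult mult.commute mult_left_mono)
  qed
  also have "\<dots> = \<eta>" using \<psi>(3) by simp
  finally show ?thesis .
qed

lemma normalized_ball_indicators:
  assumes pos: "\<forall>U. open U \<and> U \<noteq> {} \<longrightarrow> emeasure \<nu> U > 0" and S: "finite S" and d: "d > 0"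
  obtains \<psi> :: "'a \<Rightarrow> 'a \<Rightarrow> real" and P
  where "\<And>s. \<psi> s \<in> borel_measurable \<nu>" "\<And>s x. s \<in> S \<Longrightarrow> 0 \<le> \<psi> s x \<and> \<psi> s x \<le> P"
    "\<And>s. (\<integral>x. \<psi> s x \<partial>\<nu>) = 1" "\<And>s x. \<psi> s x \<noteq> 0 \<Longrightarrow> dist x s < d"
proof
  define \<mu> where "\<mu> s = measure \<nu> (ball s d)" for s
  have \<mu>: "\<mu> s > 0" for s
  proof -
    have "emeasure \<nu> (ball s d) > 0" using pos d by auto
    then show ?thesis by (simp add: \<mu>_def emeasure_eq_measure zero_less_measure_iff)
  qed
  define \<psi> where "\<psi> s x = indicator (ball s d) x / \<mu> s" for s x
  show "\<psi> s \<in> borel_measurable \<nu>" for s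
  proof -
    have "ball s d \<in> sets \<nu>" using sets_eq_borel by simp
    then show ?thesis unfolding \<psi>_def by measurable
  qed
  show "0 \<le> \<psi> s x \<and> \<psi> s x \<le> (\<Sum>s\<in>S. 1 / \<mu> s)" if "s \<in> S" for s x
  proof
    show "0 \<le> \<psi> s x" using \<mu>[of s] by (simp add: \<psi>_def)
    have "\<psi> s x \<le> 1 / \<mu> s" using \<mu>[of s] by (simp add: \<psi>_def indicator_def)
    also have "\<dots> \<le> (\<Sum>s\<in>S. 1 / \<mu> s)"
      by (rule member_le_sum[OF that]) (use S \<mu> in \<open>auto intro: less_imp_le\<close>)
    finally show "\<psi> s x \<le> (\<Sum>s\<in>S. 1 / \<mu> s)" .
  qed
  show "(\<integral>x. \<psi> s x \<partial>\<nu>) = 1" for s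
    using \<mu>[of s] by (simp add: \<psi>_def \<mu>_def space_eq_UNIV)
  show "dist x s < d" if "\<psi> s x \<noteq> 0" for s x
    using that by (auto simp: \<psi>_def indicator_def dist_commute split: if_splits)
qed

end

locale continuous_psd_kernel = finite_measure_on_compact \<nu> for \<nu> :: "'a::metric_space measure" +
  fixes K :: "'a \<Rightarrow> 'a \<Rightarrow> real"
  assumes continuous_K: "continuous_on UNIV (\<lambda>(x, z). K x z)" and psd_K: "pos_semidef_kernel K"
begin

lemma compact_UNIV_pairs: "compact (UNIV :: ('a \<times> 'a) set)"
  using compact_Times[OF compact_UNIV compact_UNIV] by simp

lemma K_commute: "K x y = K y x"
  using pos_semidef_kernel_symmetric[OF psd_K] by blast

lemma K_bounded: "\<exists>B. \<forall>x y. \<bar>K x y\<bar> \<le> B"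
proof -
  have "compact ((\<lambda>(x, z). K x z) ` UNIV)"
    using compact_continuous_image[OF continuous_K compact_UNIV_pairs] by simp
  then have "bounded ((\<lambda>(x, z). K x z) ` UNIV)" by (rule compact_imp_bounded)
  then obtain B where "\<forall>t\<in>(\<lambda>(x, z). K x z) ` UNIV. norm t \<le> B" by (auto simp: bounded_iff)
  then show ?thesis by force
qed

definition kernel_bound :: real where
  "kernel_bound = (SOME B. \<forall>x y. \<bar>K x y\<bar> \<le> B)"

lemma abs_K_le: "\<bar>K x y\<bar> \<le> kernel_bound"
  using someI_ex[OF K_bounded] unfolding kernel_bound_def by blast

lemma K_uniformly_continuous:
  assumes "\<eta> > 0"
  obtains \<delta> where "\<delta> > 0" "\<And>x y x' y'. dist x x' < \<delta> \<Longrightarrow> dist y y' < \<delta> \<Longrightarrow> \<bar>K x y - K x' y'\<bar> < \<eta>"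
proof -
  have "uniformly_continuous_on UNIV (\<lambda>(x, z). K x z)"
    using compact_uniformly_continuous[OF continuous_K compact_UNIV_pairs] .
  then obtain d where d: "d > 0"
    and close: "\<And>p p'. dist p' p < d \<Longrightarrow> dist ((\<lambda>(x, z). K x z) p') ((\<lambda>(x, z). K x z) p) < \<eta>"
    using assms unfolding uniformly_continuous_on_def by (metis UNIV_I)
  have "\<bar>K x y - K x' y'\<bar> < \<eta>" if "dist x x' < d / 2" "dist y y' < d / 2" for x y x' y'
  proof -
    have "dist (x, y) (x', y') \<le> dist x x' + dist y y'"
      unfolding dist_Pair_Pair by (rule real_le_lsqrt) (auto simp: power2_sum)
    then have "dist (x', y') (x, y) < d" using that by (simp add: dist_commute)
    then show ?thesis using close by (fastforce simp: dist_real_def abs_minus_commute)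
  qed
  then show ?thesis using that[of "d / 2"] d by simp
qed

lemma borel_measurable_K_right: "(\<lambda>z. K x z) \<in> borel_measurable \<nu>"
proof -
  have "continuous_on UNIV (\<lambda>z. (\<lambda>(x, z). K x z) (x, z))"
    by (rule continuous_on_compose2[OF continuous_K continuous_on_Pair[OF continuous_on_const continuous_on_id]]) auto
  then show ?thesis by (simp add: borel_measurable_continuous_on_UNIV)
qed

lemma integrable_K_mult: "integrable \<nu> v \<Longrightarrow> integrable \<nu> (\<lambda>y. K x y * v y)"
  by (rule integrable_bounded_mult[OF _ borel_measurable_K_right abs_K_le])

lemma abs_cov_op_diff_le:
  assumes v: "integrable \<nu> v" and K_close: "\<And>y. \<bar>K x y - K x' y\<bar> \<le> \<eta>"
  shows "\<bar>cov_op \<nu> K v x - cov_op \<nu> K v x'\<bar> \<le> \<eta> * (\<integral>y. \<bar>v y\<bar> \<partial>\<nu>)"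
proof -
  have "cov_op \<nu> K v x - cov_op \<nu> K v x' = (\<integral>y. (K x y - K x' y) * v y \<partial>\<nu>)"
    using integrable_K_mult[OF v] by (simp add: cov_op_def left_diff_distrib)
  also have "\<bar>\<dots>\<bar> \<le> (\<integral>y. \<eta> * \<bar>v y\<bar> \<partial>\<nu>)"
  proof (rule abs_integral_le_integral)
    show "integrable \<nu> (\<lambda>y. (K x y - K x' y) * v y)"
      using integrable_K_mult[OF v, of x] integrable_K_mult[OF v, of x'] by (simp add: left_diff_distrib)
    show "integrable \<nu> (\<lambda>y. \<eta> * \<bar>v y\<bar>)" using v by simp
    show "\<bar>(K x y - K x' y) * v y\<bar> \<le> \<eta> * \<bar>v y\<bar>" for y
      using K_close[of y] by (simp add: abs_mult mult_right_mono)
  qed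
  finally show ?thesis by simp
qed

lemma continuous_on_cov_op:
  assumes v: "integrable \<nu> v"
  shows "continuous_on UNIV (cov_op \<nu> K v)"
  unfolding continuous_on_iff
proof (intro ballI allI impI)
  fix x :: 'a and e :: real
  assume e: "e > 0"
  define I where "I = (\<integral>y. \<bar>v y\<bar> \<partial>\<nu>)"
  have I: "I \<ge> 0" unfolding I_def by simp
  define \<eta> where "\<eta> = e / (I + 1)"
  have \<eta>: "\<eta> > 0" "\<eta> * I < e" using e I by (auto simp: \<eta>_def field_simps)
  obtain d where d: "d > 0" and close: "\<And>x y x' y'. dist x x' < d \<Longrightarrow> dist y y' < d \<Longrightarrow> \<bar>K x y - K x' y'\<bar> < \<eta>"
    using K_uniformly_continuous[OF \<eta>(1)] by blast
  have "dist (cov_op \<nu> K v x') (cov_op \<nu> K v x) < e" if "dist x' x < d" for x'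
  proof -
    have "\<bar>cov_op \<nu> K v x' - cov_op \<nu> K v x\<bar> \<le> \<eta> * I"
      unfolding I_def by (rule abs_cov_op_diff_le[OF v]) (use close[of x' x] that d in \<open>simp add: less_imp_le\<close>)
    then show ?thesis using \<eta>(2) by (simp add: dist_real_def)
  qed
  then show "\<exists>d>0. \<forall>x'\<in>UNIV. dist x' x < d \<longrightarrow> dist (cov_op \<nu> K v x') (cov_op \<nu> K v x) < e"
    using d by blast
qed

lemma borel_measurable_cov_op: "integrable \<nu> v \<Longrightarrow> cov_op \<nu> K v \<in> borel_measurable \<nu>"
  by (rule borel_measurable_continuous_on_UNIV[OF continuous_on_cov_op])

lemma abs_cov_op_le:
  assumes v: "integrable \<nu> v"
  shows "\<bar>cov_op \<nu> K v x\<bar> \<le> kernel_bound * (\<integral>y. \<bar>v y\<bar> \<partial>\<nu>)"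
proof -
  have "\<bar>cov_op \<nu> K v x\<bar> \<le> (\<integral>y. kernel_bound * \<bar>v y\<bar> \<partial>\<nu>)"
    unfolding cov_op_def
    by (rule abs_integral_le_integral[OF integrable_K_mult[OF v]])
      (use v abs_K_le[of x] in \<open>auto simp: abs_mult mult_right_mono\<close>)
  then show ?thesis by simp
qed

lemma is_L2_cov_op: "integrable \<nu> v \<Longrightarrow> is_L2 \<nu> (cov_op \<nu> K v)"
  by (rule is_L2_bounded[OF borel_measurable_cov_op abs_cov_op_le])

lemma integrable_cov_op_mult:
  "integrable \<nu> v \<Longrightarrow> integrable \<nu> w \<Longrightarrow> integrable \<nu> (\<lambda>x. cov_op \<nu> K v x * w x)"
  by (rule integrable_bounded_mult[OF _ borel_measurable_cov_op abs_cov_op_le])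


lemma K_approx_by_partition_of_unity:
  assumes "\<eta> > 0"
  obtains S and \<phi> :: "'a \<Rightarrow> 'a \<Rightarrow> real"
  where "finite S" "\<And>c. \<phi> c \<in> borel_measurable \<nu>" "\<And>c x. \<bar>\<phi> c x\<bar> \<le> 1"
    "\<And>x y. \<bar>K x y - (\<Sum>c\<in>S. \<Sum>d\<in>S. \<phi> c x * \<phi> d y * K c d)\<bar> \<le> \<eta>"
proof -
  obtain \<delta> where \<delta>: "\<delta> > 0" and close: "\<And>x y x' y'. dist x x' < \<delta> \<Longrightarrow> dist y y' < \<delta> \<Longrightarrow> \<bar>K x y - K x' y'\<bar> < \<eta>"
    using K_uniformly_continuous[OF assms] by blast
  obtain S and \<phi> :: "'a \<Rightarrow> 'a \<Rightarrow> real" where S: "finite S" and cont: "\<And>c. continuous_on UNIV (\<phi> c)"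
    and nonneg: "\<And>c x. 0 \<le> \<phi> c x" and le1: "\<And>c x. \<phi> c x \<le> 1" and sum1: "\<And>x. (\<Sum>c\<in>S. \<phi> c x) = 1"
    and supp: "\<And>c x. \<phi> c x \<noteq> 0 \<Longrightarrow> dist x c < \<delta>"
    using continuous_partition_of_unity_subordinate_to_balls[OF compact_UNIV \<delta>] by blast
  have "\<bar>K x y - (\<Sum>c\<in>S. \<Sum>d\<in>S. \<phi> c x * \<phi> d y * K c d)\<bar> \<le> \<eta>" for x y
  proof -
    have weights: "(\<Sum>c\<in>S. \<Sum>d\<in>S. \<phi> c x * \<phi> d y) = 1"
      using sum1 by (simp add: sum_product[symmetric])
    have "K x y - (\<Sum>c\<in>S. \<Sum>d\<in>S. \<phi> c x * \<phi> d y * K c d)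
        = (\<Sum>c\<in>S. \<Sum>d\<in>S. \<phi> c x * \<phi> d y * (K x y - K c d))"
      using weights by (simp add: right_diff_distrib sum_subtractf sum_distrib_right[symmetric])
    also have "\<bar>\<dots>\<bar> \<le> (\<Sum>c\<in>S. \<Sum>d\<in>S. \<phi> c x * \<phi> d y * \<eta>)"
    proof (rule order_trans[OF sum_abs sum_mono[OF order_trans[OF sum_abs sum_mono]]])
      fix c d
      show "\<bar>\<phi> c x * \<phi> d y * (K x y - K c d)\<bar> \<le> \<phi> c x * \<phi> d y * \<eta>"
      proof (cases "\<phi> c x = 0 \<or> \<phi> d y = 0")
        case False
        then have "\<bar>K x y - K c d\<bar> \<le> \<eta>" using close[of x c y d] supp by (auto intro: less_imp_le)
        then show ?thesis using nonneg by (simp add: abs_mult mult_left_mono)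
      qed auto
    qed
    also have "\<dots> = \<eta>" using weights by (simp add: sum_distrib_right[symmetric])
    finally show ?thesis .
  qed
  moreover have "\<phi> c \<in> borel_measurable \<nu>" "\<bar>\<phi> c x\<bar> \<le> 1" for c x
    using borel_measurable_continuous_on_UNIV[OF cont] nonneg[of c x] le1[of c x] by auto
  ultimately show ?thesis using that S by blast
qed

context
  fixes S and \<phi> :: "'a \<Rightarrow> 'a \<Rightarrow> real" and \<eta> :: real
  assumes S: "finite S" and \<phi>_measurable: "\<And>c. \<phi> c \<in> borel_measurable \<nu>"
    and \<phi>_bounded: "\<And>c x. \<bar>\<phi> c x\<bar> \<le> 1"
    and K_approx: "\<And>x y. \<bar>K x y - (\<Sum>c\<in>S. \<Sum>d\<in>S. \<phi> c x * \<phi> d y * K c d)\<bar> \<le> \<eta>"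
begin

lemma integrable_weight_mult: "integrable \<nu> v \<Longrightarrow> integrable \<nu> (\<lambda>y. \<phi> d y * v y)"
  by (rule integrable_bounded_mult[OF _ \<phi>_measurable \<phi>_bounded])

lemma cov_op_approx_discrete:
  assumes v: "integrable \<nu> v"
  shows "\<bar>cov_op \<nu> K v x - (\<Sum>c\<in>S. \<phi> c x * (\<Sum>d\<in>S. K c d * (\<integral>y. \<phi> d y * v y \<partial>\<nu>)))\<bar>
    \<le> \<eta> * (\<integral>y. \<bar>v y\<bar> \<partial>\<nu>)"
proof -
  define F where "F y = (\<Sum>c\<in>S. \<Sum>d\<in>S. \<phi> c x * \<phi> d y * K c d) * v y" for y
  have F_sum: "F y = (\<Sum>c\<in>S. \<Sum>d\<in>S. (\<phi> c x * K c d) * (\<phi> d y * v y))" for y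
    unfolding F_def sum_distrib_right by (simp add: mult_ac)
  have F: "integrable \<nu> F" unfolding F_sum using integrable_weight_mult[OF v] by auto
  have "(\<integral>y. F y \<partial>\<nu>) = (\<Sum>c\<in>S. \<Sum>d\<in>S. (\<phi> c x * K c d) * (\<integral>y. \<phi> d y * v y \<partial>\<nu>))"
    unfolding F_sum using integrable_weight_mult[OF v] by (simp add: Bochner_Integration.integral_sum)
  then have "cov_op \<nu> K v x - (\<Sum>c\<in>S. \<phi> c x * (\<Sum>d\<in>S. K c d * (\<integral>y. \<phi> d y * v y \<partial>\<nu>)))
      = (\<integral>y. K x y * v y - F y \<partial>\<nu>)"
    using integrable_K_mult[OF v] F by (simp add: cov_op_def sum_distrib_left mult_ac)
  also have "\<bar>\<dots>\<bar> \<le> (\<integral>y. \<eta> * \<bar>v y\<bar> \<partial>\<nu>)"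
  proof (rule abs_integral_le_integral)
    show "integrable \<nu> (\<lambda>y. K x y * v y - F y)" using integrable_K_mult[OF v] F by simp
    show "integrable \<nu> (\<lambda>y. \<eta> * \<bar>v y\<bar>)" using v by simp
    show "\<bar>K x y * v y - F y\<bar> \<le> \<eta> * \<bar>v y\<bar>" for y
      using K_approx[of x y] by (simp add: F_def left_diff_distrib[symmetric] abs_mult mult_right_mono)
  qed
  finally show ?thesis by simp
qed

lemma cov_form_approx_discrete:
  assumes v: "integrable \<nu> v" and w: "integrable \<nu> w"
  shows "\<bar>cov_form \<nu> K v w -
     (\<Sum>c\<in>S. \<Sum>d\<in>S. (\<integral>x. \<phi> c x * w x \<partial>\<nu>) * (\<integral>y. \<phi> d y * v y \<partial>\<nu>) * K c d)\<bar>
     \<le> \<eta> * (\<integral>y. \<bar>v y\<bar> \<partial>\<nu>) * (\<integral>x. \<bar>w x\<bar> \<partial>\<nu>)"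
proof -
  define A where "A c = (\<Sum>d\<in>S. K c d * (\<integral>y. \<phi> d y * v y \<partial>\<nu>))" for c
  define G where "G x = (\<Sum>c\<in>S. \<phi> c x * A c) * w x" for x
  have G_sum: "G x = (\<Sum>c\<in>S. A c * (\<phi> c x * w x))" for x
    unfolding G_def sum_distrib_right by (simp add: mult_ac)
  have G: "integrable \<nu> G" unfolding G_sum using integrable_weight_mult[OF w] by auto
  have "(\<integral>x. G x \<partial>\<nu>) = (\<Sum>c\<in>S. \<integral>x. A c * (\<phi> c x * w x) \<partial>\<nu>)"
    unfolding G_sum by (rule Bochner_Integration.integral_sum) (use integrable_weight_mult[OF w] in auto)
  also have "\<dots> = (\<Sum>c\<in>S. A c * (\<integral>x. \<phi> c x * w x \<partial>\<nu>))" by simp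
  also have "\<dots> = (\<Sum>c\<in>S. \<Sum>d\<in>S. (\<integral>x. \<phi> c x * w x \<partial>\<nu>) * (\<integral>y. \<phi> d y * v y \<partial>\<nu>) * K c d)"
    unfolding A_def sum_distrib_right by (simp add: mult_ac)
  finally have "cov_form \<nu> K v w -
      (\<Sum>c\<in>S. \<Sum>d\<in>S. (\<integral>x. \<phi> c x * w x \<partial>\<nu>) * (\<integral>y. \<phi> d y * v y \<partial>\<nu>) * K c d)
      = (\<integral>x. cov_op \<nu> K v x * w x - G x \<partial>\<nu>)"
    using integrable_cov_op_mult[OF v w] G by (simp add: cov_form_def)
  also have "\<bar>\<dots>\<bar> \<le> (\<integral>x. (\<eta> * (\<integral>y. \<bar>v y\<bar> \<partial>\<nu>)) * \<bar>w x\<bar> \<partial>\<nu>)"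
  proof (rule abs_integral_le_integral)
    show "integrable \<nu> (\<lambda>x. cov_op \<nu> K v x * w x - G x)" using integrable_cov_op_mult[OF v w] G by simp
    show "integrable \<nu> (\<lambda>x. (\<eta> * (\<integral>y. \<bar>v y\<bar> \<partial>\<nu>)) * \<bar>w x\<bar>)" using w by simp
    show "\<bar>cov_op \<nu> K v x * w x - G x\<bar> \<le> (\<eta> * (\<integral>y. \<bar>v y\<bar> \<partial>\<nu>)) * \<bar>w x\<bar>" for x
      using cov_op_approx_discrete[OF v, of x]
      by (simp add: G_def A_def left_diff_distrib[symmetric] abs_mult mult_right_mono)
  qed
  finally show ?thesis by simp
qed

end

lemma cov_form_commute:
  assumes v: "integrable \<nu> v" and w: "integrable \<nu> w"
  shows "cov_form \<nu> K v w = cov_form \<nu> K w v"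
proof -
  define C where "C = 2 * (\<integral>y. \<bar>v y\<bar> \<partial>\<nu>) * (\<integral>y. \<bar>w y\<bar> \<partial>\<nu>)"
  have "\<bar>cov_form \<nu> K v w - cov_form \<nu> K w v\<bar> \<le> 0 + e * C" if e: "e > 0" for e
  proof -
    obtain S and \<phi> :: "'a \<Rightarrow> 'a \<Rightarrow> real" where approx: "finite S" "\<And>c. \<phi> c \<in> borel_measurable \<nu>"
      "\<And>c x. \<bar>\<phi> c x\<bar> \<le> 1" "\<And>x y. \<bar>K x y - (\<Sum>c\<in>S. \<Sum>d\<in>S. \<phi> c x * \<phi> d y * K c d)\<bar> \<le> e"
      using K_approx_by_partition_of_unity[OF e] by blast
    have "(\<Sum>c\<in>S. \<Sum>d\<in>S. (\<integral>x. \<phi> c x * v x \<partial>\<nu>) * (\<integral>y. \<phi> d y * w y \<partial>\<nu>) * K c d)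
      = (\<Sum>c\<in>S. \<Sum>d\<in>S. (\<integral>x. \<phi> c x * w x \<partial>\<nu>) * (\<integral>y. \<phi> d y * v y \<partial>\<nu>) * K c d)"
      by (subst sum.swap) (simp add: K_commute[of _ "_::'a"] mult_ac)
    then show ?thesis
      using cov_form_approx_discrete[OF approx v w] cov_form_approx_discrete[OF approx w v]
      by (simp add: C_def algebra_simps abs_le_iff)
  qed
  then have "\<bar>cov_form \<nu> K v w - cov_form \<nu> K w v\<bar> \<le> 0" by (rule le_of_forall_pos_le_add_mult)
  then show ?thesis by simp
qed

lemma cov_form_self_nonneg:
  assumes v: "integrable \<nu> v"
  shows "0 \<le> cov_form \<nu> K v v"
proof (rule le_of_forall_pos_le_add_mult)
  fix e :: real assume e: "e > 0"
  obtain S and \<phi> :: "'a \<Rightarrow> 'a \<Rightarrow> real" where approx: "finite S" "\<And>c. \<phi> c \<in> borel_measurable \<nu>"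
    "\<And>c x. \<bar>\<phi> c x\<bar> \<le> 1" "\<And>x y. \<bar>K x y - (\<Sum>c\<in>S. \<Sum>d\<in>S. \<phi> c x * \<phi> d y * K c d)\<bar> \<le> e"
    using K_approx_by_partition_of_unity[OF e] by blast
  have "0 \<le> (\<Sum>c\<in>S. \<Sum>d\<in>S. (\<integral>x. \<phi> c x * v x \<partial>\<nu>) * (\<integral>y. \<phi> d y * v y \<partial>\<nu>) * K c d)"
    by (rule double_sum_kernel_nonneg[OF psd_K approx(1)])
  then show "0 \<le> cov_form \<nu> K v v + e * ((\<integral>y. \<bar>v y\<bar> \<partial>\<nu>) * (\<integral>y. \<bar>v y\<bar> \<partial>\<nu>))"
    using cov_form_approx_discrete[OF approx v v] by (simp add: algebra_simps abs_le_iff)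
qed

lemma cov_op_add_mult:
  assumes v: "integrable \<nu> v" and w: "integrable \<nu> w"
  shows "cov_op \<nu> K (\<lambda>y. v y + t * w y) x = cov_op \<nu> K v x + t * cov_op \<nu> K w x"
  using integrable_K_mult[OF v, of x] integrable_K_mult[OF w, of x]
  by (simp add: cov_op_def distrib_left mult.left_commute)

lemma cov_op_sum:
  assumes "finite S" "\<And>s. s \<in> S \<Longrightarrow> integrable \<nu> (f s)"
  shows "cov_op \<nu> K (\<lambda>y. \<Sum>s\<in>S. f s y) x = (\<Sum>s\<in>S. cov_op \<nu> K (f s) x)"
  unfolding cov_op_def sum_distrib_left
  by (rule Bochner_Integration.integral_sum) (use integrable_K_mult assms in auto)

lemma cov_op_mult: "cov_op \<nu> K (\<lambda>y. t * v y) x = t * cov_op \<nu> K v x"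
  by (simp add: cov_op_def mult.left_commute)

lemma cov_form_mult_self: "cov_form \<nu> K (\<lambda>y. t * v y) (\<lambda>y. t * v y) = t\<^sup>2 * cov_form \<nu> K v v"
  by (simp add: cov_form_def cov_op_mult power2_eq_square mult_ac)

lemma cov_form_add_mult_self:
  assumes v: "integrable \<nu> v" and w: "integrable \<nu> w"
  shows "cov_form \<nu> K (\<lambda>y. v y + t * w y) (\<lambda>y. v y + t * w y)
    = cov_form \<nu> K v v + 2 * t * cov_form \<nu> K v w + t\<^sup>2 * cov_form \<nu> K w w"
proof -
  have "cov_form \<nu> K (\<lambda>y. v y + t * w y) (\<lambda>y. v y + t * w y)
      = cov_form \<nu> K v v + t * cov_form \<nu> K v w + t * cov_form \<nu> K w v + t\<^sup>2 * cov_form \<nu> K w w"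
    using integrable_cov_op_mult[OF v v] integrable_cov_op_mult[OF v w]
      integrable_cov_op_mult[OF w v] integrable_cov_op_mult[OF w w]
    by (simp add: cov_form_def cov_op_add_mult[OF v w] algebra_simps power2_eq_square)
  then show ?thesis using cov_form_commute[OF w v] by simp
qed

lemma cov_form_Cauchy_Schwarz:
  assumes v: "integrable \<nu> v" and w: "integrable \<nu> w"
  shows "(cov_form \<nu> K v w)\<^sup>2 \<le> cov_form \<nu> K v v * cov_form \<nu> K w w"
proof (rule discriminant_le_of_quadratic_nonneg)
  fix t
  have "integrable \<nu> (\<lambda>y. v y + t * w y)" using v w by simp
  from cov_form_self_nonneg[OF this]
  show "0 \<le> cov_form \<nu> K v v + 2 * t * cov_form \<nu> K v w + t\<^sup>2 * cov_form \<nu> K w w"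
    unfolding cov_form_add_mult_self[OF v w] .
qed


lemma inner_le_cm_norm:
  assumes "is_L2 \<nu> w" "cov_form \<nu> K w w \<le> 1"
  shows "ereal (\<integral>x. u x * w x \<partial>\<nu>) \<le> cm_norm \<nu> K u"
  unfolding cm_norm_def by (rule Sup_upper) (use assms in \<open>auto simp: cov_form_def\<close>)

lemma cm_norm_nonneg: "0 \<le> cm_norm \<nu> K u"
  using inner_le_cm_norm[of "\<lambda>x. 0" u] by (simp add: is_L2_def cov_form_def cov_op_def zero_ereal_def)

lemma cm_norm_cov_op_le:
  assumes v: "is_L2 \<nu> v"
  shows "cm_norm \<nu> K (cov_op \<nu> K v) \<le> ereal (sqrt (cov_form \<nu> K v v))"
  unfolding cm_norm_def
proof (rule Sup_least, clarify)
  fix w assume w: "is_L2 \<nu> w" and w1: "(\<integral>x. cov_op \<nu> K w x * w x \<partial>\<nu>) \<le> 1"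
  have iv: "integrable \<nu> v" and iw: "integrable \<nu> w" using v w is_L2_integrable by auto
  have "cov_form \<nu> K v w \<le> sqrt ((cov_form \<nu> K v w)\<^sup>2)" by simp
  also have "\<dots> \<le> sqrt (cov_form \<nu> K v v * cov_form \<nu> K w w)"
    by (rule real_sqrt_le_mono[OF cov_form_Cauchy_Schwarz[OF iv iw]])
  also have "\<dots> \<le> sqrt (cov_form \<nu> K v v * 1)"
    using w1 cov_form_self_nonneg[OF iv]
    by (intro real_sqrt_le_mono mult_left_mono) (auto simp: cov_form_def)
  finally show "ereal (\<integral>x. cov_op \<nu> K v x * w x \<partial>\<nu>) \<le> ereal (sqrt (cov_form \<nu> K v v))"
    by (simp add: cov_form_def)
qed

lemma inner_le_cm_norm_mult_sqrt_cov_form: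
  assumes v: "is_L2 \<nu> v" and r: "cm_norm \<nu> K u = ereal r"
  shows "(\<integral>x. u x * v x \<partial>\<nu>) \<le> r * sqrt (cov_form \<nu> K v v)"
proof -
  have scaled: "t * (\<integral>x. u x * v x \<partial>\<nu>) \<le> r" if "t\<^sup>2 * cov_form \<nu> K v v \<le> 1" for t
  proof -
    have "(\<lambda>x. u x * (t * v x)) = (\<lambda>x. t * (u x * v x))" by (simp add: mult_ac)
    then show ?thesis
      using inner_le_cm_norm[OF is_L2_mult[OF v], of t u] that r by (simp add: cov_form_mult_self)
  qed
  show ?thesis
  proof (cases "cov_form \<nu> K v v = 0")
    case True
    have "(\<integral>x. u x * v x \<partial>\<nu>) \<le> 0"
    proof (rule ccontr)
      assume "\<not> ?thesis"
      then have "(\<bar>r\<bar> + 1) / (\<integral>x. u x * v x \<partial>\<nu>) * (\<integral>x. u x * v x \<partial>\<nu>) = \<bar>r\<bar> + 1" by simp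
      then show False using scaled[of "(\<bar>r\<bar> + 1) / (\<integral>x. u x * v x \<partial>\<nu>)"] True by simp
    qed
    then show ?thesis using True by simp
  next
    case False
    then have pos: "cov_form \<nu> K v v > 0" using cov_form_self_nonneg[OF is_L2_integrable[OF v]] by simp
    have "(1 / sqrt (cov_form \<nu> K v v))\<^sup>2 * cov_form \<nu> K v v = 1"
      using pos by (simp add: power_divide)
    then have "(1 / sqrt (cov_form \<nu> K v v)) * (\<integral>x. u x * v x \<partial>\<nu>) \<le> r" by (intro scaled) simp
    then show ?thesis using pos by (simp add: field_simps)
  qed
qed

subsection \<open>From Cameron--Martin norms to point evaluations\<close>

context
  fixes S and \<psi> :: "'a \<Rightarrow> 'a \<Rightarrow> real" and P \<eta> :: real and \<alpha> :: "'a \<Rightarrow> real"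
  assumes S: "finite S"
    and \<psi>_measurable: "\<And>s. s \<in> S \<Longrightarrow> \<psi> s \<in> borel_measurable \<nu>"
    and \<psi>_bounds: "\<And>s x. s \<in> S \<Longrightarrow> 0 \<le> \<psi> s x \<and> \<psi> s x \<le> P"
    and \<psi>_integral: "\<And>s. s \<in> S \<Longrightarrow> (\<integral>x. \<psi> s x \<partial>\<nu>) = 1"
    and K_close: "\<And>s t x y. s \<in> S \<Longrightarrow> t \<in> S \<Longrightarrow> \<psi> t x \<noteq> 0 \<Longrightarrow> \<psi> s y \<noteq> 0 \<Longrightarrow> \<bar>K x y - K t s\<bar> \<le> \<eta>"
begin

lemma integrable_mollifier: "s \<in> S \<Longrightarrow> integrable \<nu> (\<psi> s)"
  by (rule integrable_bounded[OF \<psi>_measurable, of _ P]) (use \<psi>_bounds in auto)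

lemma integrable_mollified_comb: "integrable \<nu> (\<lambda>x. \<Sum>s\<in>S. \<alpha> s * \<psi> s x)"
  using integrable_mollifier by auto

lemma abs_cov_op_mollified_comb_diff_le:
  assumes t: "t \<in> S" and x: "\<psi> t x \<noteq> 0"
  shows "\<bar>cov_op \<nu> K (\<lambda>y. \<Sum>s\<in>S. \<alpha> s * \<psi> s y) x - (\<Sum>s\<in>S. \<alpha> s * K t s)\<bar> \<le> \<eta> * (\<Sum>s\<in>S. \<bar>\<alpha> s\<bar>)"
proof -
  have "\<bar>cov_op \<nu> K (\<psi> s) x - K t s\<bar> \<le> \<eta>" if s: "s \<in> S" for s
    unfolding cov_op_def mult.commute[of "K x _"]
    by (rule abs_weighted_mean_diff_le[OF integrable_mollifier[OF s] _ \<psi>_integral[OF s] borel_measurable_K_right abs_K_le])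
      (use \<psi>_bounds[OF s] K_close[OF s t x] in auto)
  then have term_le: "\<bar>\<alpha> s * (cov_op \<nu> K (\<psi> s) x - K t s)\<bar> \<le> \<bar>\<alpha> s\<bar> * \<eta>" if "s \<in> S" for s
    using that by (simp add: abs_mult mult_left_mono)
  have "cov_op \<nu> K (\<lambda>y. \<Sum>s\<in>S. \<alpha> s * \<psi> s y) x - (\<Sum>s\<in>S. \<alpha> s * K t s)
      = (\<Sum>s\<in>S. \<alpha> s * (cov_op \<nu> K (\<psi> s) x - K t s))"
    using integrable_mollifier by (simp add: cov_op_sum[OF S] cov_op_mult sum_subtractf right_diff_distrib)
  also have "\<bar>\<dots>\<bar> \<le> (\<Sum>s\<in>S. \<bar>\<alpha> s\<bar> * \<eta>)"
    by (rule order_trans[OF sum_abs sum_mono[OF term_le]])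
  also have "\<dots> = \<eta> * (\<Sum>s\<in>S. \<bar>\<alpha> s\<bar>)" unfolding sum_distrib_left by (simp add: mult.commute)
  finally show ?thesis .
qed

lemma cov_form_approx_bil:
  "\<bar>cov_form \<nu> K (\<lambda>x. \<Sum>s\<in>S. \<alpha> s * \<psi> s x) (\<lambda>x. \<Sum>s\<in>S. \<alpha> s * \<psi> s x)
     - (\<Sum>t\<in>S. \<Sum>s\<in>S. \<alpha> t * \<alpha> s * K t s)\<bar> \<le> \<eta> * (\<Sum>s\<in>S. \<bar>\<alpha> s\<bar>)\<^sup>2"
proof -
  define v where "v = (\<lambda>x. \<Sum>s\<in>S. \<alpha> s * \<psi> s x)"
  define A where "A = (\<Sum>s\<in>S. \<bar>\<alpha> s\<bar>)"
  define m where "m t = (\<Sum>s\<in>S. \<alpha> s * K t s)" for t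
  have v: "integrable \<nu> v" unfolding v_def by (rule integrable_mollified_comb)
  have integral_near: "\<bar>(\<integral>x. \<psi> t x * cov_op \<nu> K v x \<partial>\<nu>) - m t\<bar> \<le> \<eta> * A" if t: "t \<in> S" for t
    by (rule abs_weighted_mean_diff_le[OF integrable_mollifier[OF t] _ \<psi>_integral[OF t]
          borel_measurable_cov_op[OF v] abs_cov_op_le[OF v]])
      (use \<psi>_bounds[OF t] abs_cov_op_mollified_comb_diff_le[OF t] in \<open>auto simp: v_def m_def A_def\<close>)
  have "cov_form \<nu> K v v = (\<integral>x. (\<Sum>t\<in>S. \<alpha> t * (\<psi> t x * cov_op \<nu> K v x)) \<partial>\<nu>)"
    unfolding cov_form_def by (rule Bochner_Integration.integral_cong) (auto simp: v_def sum_distrib_right mult_ac)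
  also have "\<dots> = (\<Sum>t\<in>S. \<alpha> t * (\<integral>x. \<psi> t x * cov_op \<nu> K v x \<partial>\<nu>))"
    using integrable_cov_op_mult[OF v integrable_mollifier]
    by (subst Bochner_Integration.integral_sum) (auto simp: mult.commute)
  finally have "cov_form \<nu> K v v - (\<Sum>t\<in>S. \<Sum>s\<in>S. \<alpha> t * \<alpha> s * K t s)
      = (\<Sum>t\<in>S. \<alpha> t * ((\<integral>x. \<psi> t x * cov_op \<nu> K v x \<partial>\<nu>) - m t))"
    by (simp add: m_def sum_distrib_left sum_subtractf right_diff_distrib mult.assoc)
  also have "\<bar>\<dots>\<bar> \<le> (\<Sum>t\<in>S. \<bar>\<alpha> t\<bar> * (\<eta> * A))"
    by (rule order_trans[OF sum_abs sum_mono]) (simp add: abs_mult mult_left_mono integral_near)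
  also have "\<dots> = (\<Sum>t\<in>S. \<bar>\<alpha> t\<bar>) * (\<eta> * A)" by (rule sum_distrib_right[symmetric])
  also have "\<dots> = \<eta> * A\<^sup>2" by (simp add: A_def power2_eq_square mult_ac)
  finally show ?thesis unfolding v_def A_def .
qed

end

end

lemma cov_form_le_if_cm_norm_le:
  assumes K1: "continuous_psd_kernel \<nu> K1" and K2: "continuous_psd_kernel \<nu> K2" and M: "M > 0"
    and cm_le: "\<forall>u\<in>cm_space \<nu> K1. cm_norm \<nu> K2 u \<le> ereal M * cm_norm \<nu> K1 u"
    and v: "is_L2 \<nu> v"
  shows "cov_form \<nu> K1 v v \<le> M\<^sup>2 * cov_form \<nu> K2 v v"
proof -
  interpret K1: continuous_psd_kernel \<nu> K1 by (rule K1)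
  interpret K2: continuous_psd_kernel \<nu> K2 by (rule K2)
  have iv: "integrable \<nu> v" by (rule K1.is_L2_integrable[OF v])
  define Q1 where "Q1 = cov_form \<nu> K1 v v"
  define Q2 where "Q2 = cov_form \<nu> K2 v v"
  have Q1: "0 \<le> Q1" and Q2: "0 \<le> Q2"
    unfolding Q1_def Q2_def by (rule K1.cov_form_self_nonneg[OF iv], rule K2.cov_form_self_nonneg[OF iv])
  define u where "u = cov_op \<nu> K1 v"
  have u: "is_L2 \<nu> u" unfolding u_def by (rule K1.is_L2_cov_op[OF iv])
  have "cm_norm \<nu> K1 u \<le> ereal (sqrt Q1)" unfolding u_def Q1_def by (rule K1.cm_norm_cov_op_le[OF v])
  then have "u \<in> cm_space \<nu> K1" using u by (auto simp: cm_space_def)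
  then have "cm_norm \<nu> K2 u \<le> ereal M * cm_norm \<nu> K1 u" using cm_le by blast
  also have "\<dots> \<le> ereal M * ereal (sqrt Q1)"
    using \<open>cm_norm \<nu> K1 u \<le> ereal (sqrt Q1)\<close> M by (intro ereal_mult_left_mono) auto
  finally have "cm_norm \<nu> K2 u \<le> ereal M * ereal (sqrt Q1)" .
  then obtain r where r: "cm_norm \<nu> K2 u = ereal r" and r_le: "r \<le> M * sqrt Q1"
    using K2.cm_norm_nonneg[of u] by (cases "cm_norm \<nu> K2 u") auto
  have "Q1 = (\<integral>x. u x * v x \<partial>\<nu>)" by (simp add: Q1_def u_def cov_form_def)
  also have "\<dots> \<le> r * sqrt Q2" unfolding Q2_def by (rule K2.inner_le_cm_norm_mult_sqrt_cov_form[OF v r])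
  also have "\<dots> \<le> M * sqrt Q1 * sqrt Q2" using r_le Q2 by (simp add: mult_right_mono)
  finally have le: "sqrt Q1 * sqrt Q1 \<le> sqrt Q1 * (M * sqrt Q2)" using Q1 by (simp add: mult_ac)
  have "sqrt Q1 \<le> M * sqrt Q2"
  proof (cases "Q1 = 0")
    case False
    then have "0 < sqrt Q1" using Q1 by simp
    then show ?thesis using le mult_le_cancel_left_pos by blast
  qed (use M Q2 in simp)
  then have "(sqrt Q1)\<^sup>2 \<le> (M * sqrt Q2)\<^sup>2" by (rule power_mono) (use Q1 in simp)
  then show ?thesis using Q1 Q2 by (simp add: Q1_def Q2_def power_mult_distrib)
qed

lemma exists_L2_approx_bil:
  assumes K1: "continuous_psd_kernel \<nu> K1" and K2: "continuous_psd_kernel \<nu> K2"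
    and pos: "\<forall>U. open U \<and> U \<noteq> {} \<longrightarrow> emeasure \<nu> U > 0"
    and fin: "finite (fsupp \<alpha>)" and e: "e > 0"
  obtains v where "is_L2 \<nu> v"
    "\<bar>cov_form \<nu> K1 v v - bil K1 \<alpha> \<alpha>\<bar> \<le> e * (\<Sum>s\<in>fsupp \<alpha>. \<bar>\<alpha> s\<bar>)\<^sup>2"
    "\<bar>cov_form \<nu> K2 v v - bil K2 \<alpha> \<alpha>\<bar> \<le> e * (\<Sum>s\<in>fsupp \<alpha>. \<bar>\<alpha> s\<bar>)\<^sup>2"
proof -
  interpret K1: continuous_psd_kernel \<nu> K1 by (rule K1)
  interpret K2: continuous_psd_kernel \<nu> K2 by (rule K2)
  define S where "S = fsupp \<alpha>"
  have S: "finite S" using fin by (simp add: S_def)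
  have bil_eq: "bil K \<alpha> \<alpha> = (\<Sum>t\<in>S. \<Sum>s\<in>S. \<alpha> t * \<alpha> s * K t s)" for K
    unfolding S_def by (rule bil_eq_sum_superset) (use fin in auto)
  obtain d1 where d1: "d1 > 0" and close1: "\<And>x y x' y'. dist x x' < d1 \<Longrightarrow> dist y y' < d1 \<Longrightarrow> \<bar>K1 x y - K1 x' y'\<bar> < e"
    using K1.K_uniformly_continuous[OF e] by blast
  obtain d2 where d2: "d2 > 0" and close2: "\<And>x y x' y'. dist x x' < d2 \<Longrightarrow> dist y y' < d2 \<Longrightarrow> \<bar>K2 x y - K2 x' y'\<bar> < e"
    using K2.K_uniformly_continuous[OF e] by blast
  obtain \<psi> :: "'a \<Rightarrow> 'a \<Rightarrow> real" and P where \<psi>_measurable: "\<And>s. \<psi> s \<in> borel_measurable \<nu>"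
    and \<psi>_bounds: "\<And>s x. s \<in> S \<Longrightarrow> 0 \<le> \<psi> s x \<and> \<psi> s x \<le> P" and \<psi>_integral: "\<And>s. (\<integral>x. \<psi> s x \<partial>\<nu>) = 1"
    and \<psi>_supp: "\<And>s x. \<psi> s x \<noteq> 0 \<Longrightarrow> dist x s < min d1 d2"
    using K1.normalized_ball_indicators[OF pos S, of "min d1 d2"] d1 d2 by auto
  have near1: "\<bar>K1 x y - K1 t s\<bar> \<le> e" and near2: "\<bar>K2 x y - K2 t s\<bar> \<le> e"
    if "\<psi> t x \<noteq> 0" "\<psi> s y \<noteq> 0" for s t x y
    using close1[of x t y s] close2[of x t y s] \<psi>_supp[OF that(1)] \<psi>_supp[OF that(2)] by auto
  have "\<bar>\<Sum>s\<in>S. \<alpha> s * \<psi> s x\<bar> \<le> (\<Sum>s\<in>S. \<bar>\<alpha> s\<bar> * P)" for x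
    by (rule order_trans[OF sum_abs sum_mono]) (use \<psi>_bounds in \<open>auto simp: abs_mult intro!: mult_left_mono\<close>)
  then have "is_L2 \<nu> (\<lambda>x. \<Sum>s\<in>S. \<alpha> s * \<psi> s x)" by (intro K1.is_L2_bounded) (use \<psi>_measurable in auto)
  with K1.cov_form_approx_bil[where \<psi>=\<psi> and \<alpha>=\<alpha>, OF S \<psi>_measurable \<psi>_bounds \<psi>_integral near1]
    K2.cov_form_approx_bil[where \<psi>=\<psi> and \<alpha>=\<alpha>, OF S \<psi>_measurable \<psi>_bounds \<psi>_integral near2]
  show ?thesis using that unfolding bil_eq S_def by blast
qed

lemma bil_le_if_cm_norm_le:
  assumes K1: "continuous_psd_kernel \<nu> K1" and K2: "continuous_psd_kernel \<nu> K2" and M: "M > 0"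
    and cm_le: "\<forall>u\<in>cm_space \<nu> K1. cm_norm \<nu> K2 u \<le> ereal M * cm_norm \<nu> K1 u"
    and pos: "\<forall>U. open U \<and> U \<noteq> {} \<longrightarrow> emeasure \<nu> U > 0"
  shows "kernel_le_scaled K1 (M\<^sup>2) K2"
  unfolding kernel_le_scaled_def
proof (intro allI impI)
  fix \<alpha> :: "'a \<Rightarrow> real" assume fin: "finite (fsupp \<alpha>)"
  define A where "A = (\<Sum>s\<in>fsupp \<alpha>. \<bar>\<alpha> s\<bar>)"
  show "bil K1 \<alpha> \<alpha> \<le> M\<^sup>2 * bil K2 \<alpha> \<alpha>"
  proof (rule le_of_forall_pos_le_add_mult[where C="(M\<^sup>2 + 1) * A\<^sup>2"])
    fix e :: real assume e: "e > 0"
    obtain v where v: "is_L2 \<nu> v" and approx1: "\<bar>cov_form \<nu> K1 v v - bil K1 \<alpha> \<alpha>\<bar> \<le> e * A\<^sup>2"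
      and approx2: "\<bar>cov_form \<nu> K2 v v - bil K2 \<alpha> \<alpha>\<bar> \<le> e * A\<^sup>2"
      using exists_L2_approx_bil[OF K1 K2 pos fin e] unfolding A_def by blast
    have "M\<^sup>2 * cov_form \<nu> K2 v v \<le> M\<^sup>2 * (bil K2 \<alpha> \<alpha> + e * A\<^sup>2)"
      using approx2 by (intro mult_left_mono) auto
    moreover have "cov_form \<nu> K1 v v \<le> M\<^sup>2 * cov_form \<nu> K2 v v"
      by (rule cov_form_le_if_cm_norm_le[OF K1 K2 M cm_le v])
    ultimately show "bil K1 \<alpha> \<alpha> \<le> M\<^sup>2 * bil K2 \<alpha> \<alpha> + e * ((M\<^sup>2 + 1) * A\<^sup>2)"
      using approx1 by (simp add: algebra_simps abs_le_iff)
  qed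
qed

lemma kernels_comparable_if_cm_norm_equivalent:
  assumes K1: "continuous_psd_kernel \<nu> K1" and K2: "continuous_psd_kernel \<nu> K2"
    and pos: "\<forall>U. open U \<and> U \<noteq> {} \<longrightarrow> emeasure \<nu> U > 0"
    and equivalent: "cm_norm_equivalent \<nu> K1 K2"
  obtains M where "M > 0" "kernel_le_scaled K2 M K1" "kernel_le_scaled K1 M K2"
proof -
  obtain c where c: "c > 0" and space: "cm_space \<nu> K1 = cm_space \<nu> K2"
    and bounds: "\<forall>u\<in>cm_space \<nu> K1. ereal c * cm_norm \<nu> K1 u \<le> cm_norm \<nu> K2 u
                                    \<and> cm_norm \<nu> K2 u \<le> ereal (1 / c) * cm_norm \<nu> K1 u"
    using equivalent unfolding cm_norm_equivalent_def by blast
  have le21: "\<forall>u\<in>cm_space \<nu> K1. cm_norm \<nu> K2 u \<le> ereal (1 / c) * cm_norm \<nu> K1 u"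
    using bounds by blast
  have le12: "\<forall>u\<in>cm_space \<nu> K2. cm_norm \<nu> K1 u \<le> ereal (1 / c) * cm_norm \<nu> K2 u"
  proof
    fix u assume "u \<in> cm_space \<nu> K2"
    then have "ereal (1 / c) * (ereal c * cm_norm \<nu> K1 u) \<le> ereal (1 / c) * cm_norm \<nu> K2 u"
      using bounds space c by (intro ereal_mult_left_mono) auto
    moreover have "ereal (1 / c) * (ereal c * cm_norm \<nu> K1 u) = cm_norm \<nu> K1 u"
      using c by (simp add: mult.assoc[symmetric] one_ereal_def)
    ultimately show "cm_norm \<nu> K1 u \<le> ereal (1 / c) * cm_norm \<nu> K2 u" by simp
  qed
  show ?thesis
    using that[of "(1 / c)\<^sup>2"] c bil_le_if_cm_norm_le[OF K1 K2 _ le21 pos] bil_le_if_cm_norm_le[OF K2 K1 _ le12 pos]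
    by simp
qed

theorem lemma4p3:
  fixes \<nu> :: "'a::metric_space measure"
    and \<rho> \<rho>' :: "'a \<Rightarrow> 'a \<Rightarrow> real"
    and m m' :: "'a \<Rightarrow> real"
    and y :: "nat \<Rightarrow> nat \<Rightarrow> nat \<Rightarrow> 'a \<Rightarrow> real"
  assumes X: "compact (UNIV :: 'a set)" "connected (UNIV :: 'a set)" "infinite (UNIV :: 'a set)"
    and nu: "sets \<nu> = sets borel" "space \<nu> = UNIV" "finite_measure \<nu>"
      "\<forall>U. open U \<and> U \<noteq> {} \<longrightarrow> emeasure \<nu> U > 0"
    and rho: "continuous_on UNIV (\<lambda>(x, z). \<rho> x z)" "strictly_pos_def_kernel \<rho>"
    and rho': "continuous_on UNIV (\<lambda>(x, z). \<rho>' x z)" "strictly_pos_def_kernel \<rho>'"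
    and means: "is_L2 \<nu> m" "is_L2 \<nu> m'"
    and assmI: "cm_norm_equivalent \<nu> \<rho> \<rho>'"
  shows "((\<forall>n. \<forall>i\<in>{1..n}. y n i \<in> H0 \<rho>) \<longrightarrow>
            (\<forall>h\<in>Hsp \<rho>. blp_consistent \<rho> y h \<longleftrightarrow> blp_consistent \<rho>' y h))
         \<and> S_adm \<rho> = S_adm \<rho>'"
proof -
  note psd = strictly_pos_def_kernel_imp_pos_semidef[OF rho(2)] strictly_pos_def_kernel_imp_pos_semidef[OF rho'(2)]
  have "finite_measure_on_compact \<nu>" using nu(1-3) X(1) by (simp add: finite_measure_on_compact_def)
  then have "continuous_psd_kernel \<nu> \<rho>" "continuous_psd_kernel \<nu> \<rho>'"
    using rho(1) rho'(1) psd by (simp_all add: continuous_psd_kernel_def continuous_psd_kernel_axioms_def)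
  then obtain M where M: "M > 0" "kernel_le_scaled \<rho>' M \<rho>" "kernel_le_scaled \<rho> M \<rho>'"
    using kernels_comparable_if_cm_norm_equivalent[OF _ _ nu(4) assmI] by blast
  show ?thesis
    using blp_consistent_iff_if_kernels_comparable[OF psd M] S_adm_eq_if_kernels_comparable[OF psd M] by blast
qed

end
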